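(* Let $t_f>0$ and let $\bar{\boldsymbol{q}}=(p_x,p_y,c_0)\in\mathbb{R}^3$. Let $\boldsymbol{Z}(t,\bar{\boldsymbol{q}})=(X(t,\bar{\boldsymbol{q}}),Y(t,\bar{\boldsymbol{q}}),\Theta(t,\bar{\boldsymbol{q}}))$ be the solution of the backward system $$\dot X=-\cos\Theta,\qquad \dot Y=-\sin\Theta,\qquad \dot\Theta=-\big[p_xY-p_yX+c_0\big],$$ with $(X(0),Y(0),\Theta(0))=(0,0,-\pi/2)$. If there are two different instants $t_1,t_2\in(0,t_f)$ such that the velocity vectors $[\cos\Theta(t_1,\bar{\boldsymbol{q}}),\sin\Theta(t_1,\bar{\boldsymbol{q}})]$ and $[\cos\Theta(t_2,\bar{\boldsymbol{q}}),\sin\Theta(t_2,\bar{\boldsymbol{q}})]$ are colinear, i.e. $$\frac{Y(t_1,\bar{\boldsymbol{q}})-Y(t_2,\bar{\boldsymbol{q}})}{X(t_1,\bar{\boldsymbol{q}})-X(t_2,\bar{\boldsymbol{q}})}=\tan\Theta(t_1,\bar{\boldsymbol{q}})=\tan\Theta(t_2,\bar{\boldsymbol{q}}),$$ then the extremal trajectory $\boldsymbol{Z}(t,\bar{\boldsymbol{q}})$, $t\in[0,t_f]$, is not optimal for the minimum-effort control problem (MECP) described in the context.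
   Context: Kinematics: $\dot x=\cos\theta$, $\dot y=\sin\theta$, $\dot\theta=u$, with state $(x,y,\theta)\in\mathbb{R}^2\times[0,2\pi)$ and measurable control $u$. The MECP: given an initial state $(x_0,y_0,\theta_0)$, a fixed terminal time $t_f>0$, steer the system on $[0,t_f]$ from the initial state to the final state $(0,0,-\pi/2)$ while minimizing $J=\int_0^{t_f}\tfrac12u^2\,dt$. By the Pontryagin maximum principle, extremals satisfy $u(t)=p_\theta(t)=p_xy(t)-p_yx(t)+c_0$ with constants $p_x,p_y,c_0$. The backward system in the claim (with parameter $\boldsymbol{q}=(p_x,p_y,c_0)$) generates, upon time reversal, extremal trajectories of the MECP ending at $(0,0,-\pi/2)$; its extremal control is $U(t,\boldsymbol{q})=p_xY(t,\boldsymbol{q})-p_yX(t,\boldsymbol{q})+c_0$. The trajectory $\boldsymbol{Z}(t,\bar{\boldsymbol q})$, $t\in[0,t_f]$, is regarded (traversed in reverse time) as a candidate solution of the MECP from the initial state $\boldsymbol{Z}(t_f,\bar{\boldsymbol q})$ with duration $t_f$. *)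

theory Defs
  imports "HOL-Analysis.Analysis"
begin

text \<open>The angle is a real lift of the angle in [0,2pi); the terminal heading -pi/2 is
  therefore imposed modulo 2pi.\<close>

definition mecp_theta :: "real \<Rightarrow> (real \<Rightarrow> real) \<Rightarrow> real \<Rightarrow> real" where
  "mecp_theta th0 u t = th0 + (LINT s:{0..t}|lborel. u s)"

definition mecp_x :: "real \<Rightarrow> real \<Rightarrow> (real \<Rightarrow> real) \<Rightarrow> real \<Rightarrow> real" where
  "mecp_x x0 th0 u t = x0 + (LINT s:{0..t}|lborel. cos (mecp_theta th0 u s))"

definition mecp_y :: "real \<Rightarrow> real \<Rightarrow> (real \<Rightarrow> real) \<Rightarrow> real \<Rightarrow> real" where
  "mecp_y y0 th0 u t = y0 + (LINT s:{0..t}|lborel. sin (mecp_theta th0 u s))"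

definition mecp_cost :: "real \<Rightarrow> (real \<Rightarrow> real) \<Rightarrow> real" where
  "mecp_cost tf u = (LINT s:{0..tf}|lborel. (u s)\<^sup>2 / 2)"

definition mecp_admissible :: "real \<Rightarrow> (real \<Rightarrow> real) \<Rightarrow> bool" where
  "mecp_admissible tf u \<longleftrightarrow>
     set_integrable lborel {0..tf} u \<and> set_integrable lborel {0..tf} (\<lambda>s. (u s)\<^sup>2)"

definition mecp_steers :: "real \<Rightarrow> real \<times> real \<times> real \<Rightarrow> (real \<Rightarrow> real) \<Rightarrow> bool" where
  "mecp_steers tf z0 u \<longleftrightarrow> (case z0 of (x0, y0, th0) \<Rightarrow>
     mecp_admissible tf u \<and>
     mecp_x x0 th0 u tf = 0 \<and> mecp_y y0 th0 u tf = 0 \<and>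
     (\<exists>k::int. mecp_theta th0 u tf = - pi / 2 + 2 * pi * of_int k))"

definition mecp_optimal :: "real \<Rightarrow> real \<times> real \<times> real \<Rightarrow> (real \<Rightarrow> real) \<Rightarrow> bool" where
  "mecp_optimal tf z0 u \<longleftrightarrow>
     mecp_steers tf z0 u \<and> (\<forall>v. mecp_steers tf z0 v \<longrightarrow> mecp_cost tf u \<le> mecp_cost tf v)"

end

theory Submission
  imports Defs
begin

text \<open>Reversing time turns Z into a trajectory (x, y, th) on [0, tf] that ends at (0, 0, -pi/2)
  and is driven by u = px y - py x + c0; along it u' = du = px sin th - py cos th and
  du' = (px cos th + py sin th) u.  At the colinear instants a < b the headings agree modulo pi and
  are parallel to the chord, so reflecting the arc between a and b across the chord gives a
  trajectory with the same endpoints and the same cost, driven by the control v that is -u on (a, b)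
  and u elsewhere.  If u were optimal, so would be v.

  But v can be improved.  For four variations of the control (tents and a constant), the map from
  their coefficients to (final x, final y, final angle, cost) is differentiable at 0; when its
  derivative is onto, Sussmann's open mapping theorem yields a perturbation with the same final state
  and strictly lower cost.  Such four variations exist unless a nonzero multiplier annihilates the
  first variations of all of them.  Tents at the corner a, where v jumps, force u a = du a = 0 if
  the cost component of the multiplier is nonzero, and otherwise u vanishes on (0, a).  Either way
  u and du vanish together somewhere, so u vanishes identically by Gronwall's inequality for
  u^2 + du^2; then the heading is constantly -pi/2 and x a = x b, contradicting X t1 \<noteq> X t2.\<close>

section \<open>Estimates for real functions\<close>

lemma abs_diff_le_by_deriv_bound:
  fixes f f' :: "real \<Rightarrow> real"
  assumes cont: "continuous_on {p..q} f" and r: "r \<in> {p..q}" and s: "s \<in> {p..q}"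
    and deriv: "\<And>z. p < z \<Longrightarrow> z < q \<Longrightarrow> (f has_real_derivative f' z) (at z)"
    and bound: "\<And>z. p < z \<Longrightarrow> z < q \<Longrightarrow> \<bar>f' z\<bar> \<le> B"
  shows "\<bar>f s - f r\<bar> \<le> B * \<bar>s - r\<bar>"
proof -
  have ordered: "\<bar>f t' - f t\<bar> \<le> B * (t' - t)" if "t < t'" "t \<in> {p..q}" "t' \<in> {p..q}" for t t'
  proof -
    have "continuous_on {t..t'} f" using cont that by (auto intro: continuous_on_subset)
    moreover have "f differentiable (at z)" if "t < z" "z < t'" for z
      using deriv[of z] that \<open>t \<in> {p..q}\<close> \<open>t' \<in> {p..q}\<close> real_differentiable_def by force
    ultimately obtain l z where z: "t < z" "z < t'" "DERIV f z :> l" "f t' - f t = (t' - t) * l"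
      using MVT[OF \<open>t < t'\<close>] by blast
    have zpq: "p < z" "z < q" using z(1,2) that by auto
    have "l = f' z" using DERIV_unique[OF z(3) deriv[OF zpq]] .
    then have "\<bar>l\<bar> \<le> B" using bound[OF zpq] by simp
    then show ?thesis using z(4) \<open>t < t'\<close> by (simp add: abs_mult mult.commute mult_left_mono)
  qed
  consider "r < s" | "r = s" | "s < r" by linarith
  then show ?thesis
  proof cases
    case 1 then show ?thesis using ordered[OF 1 r s] by simp
  next
    case 3 then show ?thesis using ordered[OF 3 s r] by (simp add: abs_minus_commute)
  qed simp
qed

lemma first_order_remainder_bound:
  fixes f f' :: "real \<Rightarrow> real"
  assumes cont: "continuous_on {p..q} f"
    and deriv: "\<And>w. p < w \<Longrightarrow> w < q \<Longrightarrow> (f has_real_derivative f' w) (at w)"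
    and t: "t \<in> {p..q}" and z: "z \<in> {p..q}"
    and lip: "\<And>w. p < w \<Longrightarrow> w < q \<Longrightarrow> \<bar>f' w - f' t\<bar> \<le> M * \<bar>w - t\<bar>" and M: "0 \<le> M"
  shows "\<bar>f z - f t - f' t * (z - t)\<bar> \<le> M * (z - t)\<^sup>2"
proof -
  define g where "g w = f w - f' t * w" for w
  have cg: "continuous_on {min t z..max t z} g"
    unfolding g_def[abs_def] using t z by (intro continuous_intros continuous_on_subset[OF cont]) auto
  have "\<bar>g z - g t\<bar> \<le> (M * \<bar>z - t\<bar>) * \<bar>z - t\<bar>"
  proof (rule abs_diff_le_by_deriv_bound[OF cg, where f'="\<lambda>w. f' w - f' t"])
    show "t \<in> {min t z..max t z}" "z \<in> {min t z..max t z}" by auto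
    fix w assume w: "min t z < w" "w < max t z"
    then have w': "p < w" "w < q" using t z by auto
    show "(g has_real_derivative f' w - f' t) (at w)"
      unfolding g_def[abs_def] by (auto intro!: derivative_eq_intros deriv[OF w'])
    have "\<bar>w - t\<bar> \<le> \<bar>z - t\<bar>" using w by (auto simp: min_def max_def split: if_splits)
    then show "\<bar>f' w - f' t\<bar> \<le> M * \<bar>z - t\<bar>" using lip[OF w'] M by (meson mult_left_mono order_trans)
  qed
  moreover have "g z - g t = f z - f t - f' t * (z - t)" by (simp add: g_def algebra_simps)
  moreover have "(M * \<bar>z - t\<bar>) * \<bar>z - t\<bar> = M * (z - t)\<^sup>2"
    by (simp add: power2_eq_square abs_mult_self_eq mult.assoc)
  ultimately show ?thesis by simp
qed

lemma abs_sin_diff_le: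
  fixes z t :: real
  shows "\<bar>sin z - sin t\<bar> \<le> \<bar>z - t\<bar>"
  using abs_diff_le_by_deriv_bound[of "min z t" "max z t" sin t z cos 1]
  by (auto intro: continuous_on_sin_real DERIV_sin abs_cos_le_one)

lemma abs_cos_diff_le:
  fixes z t :: real
  shows "\<bar>cos z - cos t\<bar> \<le> \<bar>z - t\<bar>"
  using abs_diff_le_by_deriv_bound[of "min z t" "max z t" cos t z "\<lambda>w. - sin w" 1]
  by (auto intro: continuous_on_cos_real DERIV_cos)

lemma abs_cos_add_remainder_le:
  fixes t h :: real
  shows "\<bar>cos (t + h) - cos t + sin t * h\<bar> \<le> h\<^sup>2"
  using first_order_remainder_bound[of "min t (t + h)" "max t (t + h)" cos "\<lambda>w. - sin w" t "t + h" 1]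
    abs_sin_diff_le
  by (auto intro: continuous_on_cos_real DERIV_cos simp: abs_minus_commute)

lemma abs_sin_add_remainder_le:
  fixes t h :: real
  shows "\<bar>sin (t + h) - sin t - cos t * h\<bar> \<le> h\<^sup>2"
  using first_order_remainder_bound[of "min t (t + h)" "max t (t + h)" sin cos t "t + h" 1]
    abs_cos_diff_le
  by (auto intro: continuous_on_sin_real DERIV_sin)

lemma zero_if_abs_le_mult_epsilon:
  fixes z C \<delta> :: real
  assumes "0 < \<delta>" and small: "\<And>e. 0 < e \<Longrightarrow> e < \<delta> \<Longrightarrow> \<bar>z\<bar> \<le> C * e"
  shows "z = 0"
proof (rule ccontr)
  assume "z \<noteq> 0"
  define e where "e = min (\<delta> / 2) (\<bar>z\<bar> / (2 * (\<bar>C\<bar> + 1)))"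
  have e: "0 < e" "e < \<delta>" using \<open>0 < \<delta>\<close> \<open>z \<noteq> 0\<close> by (auto simp: e_def)
  have "\<bar>z\<bar> \<le> C * e" using small[OF e] .
  also have "\<dots> \<le> (\<bar>C\<bar> + 1) * e" using e by (intro mult_right_mono) auto
  also have "\<dots> \<le> (\<bar>C\<bar> + 1) * (\<bar>z\<bar> / (2 * (\<bar>C\<bar> + 1)))"
    by (intro mult_left_mono) (auto simp: e_def)
  also have "\<dots> = \<bar>z\<bar> / 2" by (simp add: field_simps)
  finally show False using \<open>z \<noteq> 0\<close> by simp
qed

lemma zero_if_abs_affine_le_square:
  fixes A B C \<delta> :: real
  assumes "0 < \<delta>" and small: "\<And>e. 0 < e \<Longrightarrow> e < \<delta> \<Longrightarrow> \<bar>A + B * e\<bar> \<le> C * e\<^sup>2"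
  shows "A = 0" "B = 0"
proof -
  show A: "A = 0"
  proof (rule zero_if_abs_le_mult_epsilon[OF \<open>0 < \<delta>\<close>, where C="\<bar>B\<bar> + \<bar>C\<bar> * \<delta>"])
    fix e assume e: "0 < e" "e < \<delta>"
    have "C * e\<^sup>2 \<le> \<bar>C\<bar> * e * e"
      using mult_right_mono[OF abs_ge_self[of C] zero_le_power2[of e]] by (simp add: power2_eq_square mult.assoc)
    also have "\<dots> \<le> \<bar>C\<bar> * \<delta> * e" using e by (intro mult_right_mono mult_left_mono) auto
    finally have "C * e\<^sup>2 \<le> \<bar>C\<bar> * \<delta> * e" .
    moreover have "\<bar>A\<bar> \<le> \<bar>B\<bar> * e + C * e\<^sup>2"
      using small[OF e] abs_triangle_ineq2[of A "- (B * e)"] e(1) by (simp add: abs_mult)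
    ultimately show "\<bar>A\<bar> \<le> (\<bar>B\<bar> + \<bar>C\<bar> * \<delta>) * e" by (simp add: algebra_simps)
  qed
  show "B = 0"
  proof (rule zero_if_abs_le_mult_epsilon[OF \<open>0 < \<delta>\<close>, where C=C])
    fix e assume e: "0 < e" "e < \<delta>"
    have "\<bar>B\<bar> * e \<le> (C * e) * e" using small[OF e] A e(1) by (simp add: abs_mult power2_eq_square)
    then show "\<bar>B\<bar> \<le> C * e" using e(1) by simp
  qed
qed

lemma gronwall_zero:
  fixes E E' :: "real \<Rightarrow> real"
  assumes deriv: "\<And>w. p < w \<Longrightarrow> w < q \<Longrightarrow> (E has_real_derivative E' w) (at w)"
    and bound: "\<And>w. p < w \<Longrightarrow> w < q \<Longrightarrow> \<bar>E' w\<bar> \<le> K * E w"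
    and nonneg: "\<And>w. p < w \<Longrightarrow> w < q \<Longrightarrow> 0 \<le> E w"
    and c: "p < c" "c < q" "E c = 0" and z: "p < z" "z < q"
  shows "E z = 0"
proof -
  have "E z \<le> 0"
  proof (cases "c \<le> z")
    case True
    define f where "f w = E w * exp (- K * w)" for w
    have "f z \<le> f c"
    proof (rule DERIV_nonpos_imp_nonincreasing[OF True])
      fix w assume "c \<le> w" "w \<le> z"
      then have w: "p < w" "w < q" using c z by auto
      have "(f has_real_derivative (E' w - K * E w) * exp (- K * w)) (at w)"
        unfolding f_def[abs_def] by (auto intro!: derivative_eq_intros deriv[OF w] simp: algebra_simps)
      moreover have "(E' w - K * E w) * exp (- K * w) \<le> 0"
        using bound[OF w] by (simp add: mult_le_0_iff)
      ultimately show "\<exists>y. DERIV f w :> y \<and> y \<le> 0" by blast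
    qed
    then show ?thesis using c(3) by (simp add: f_def mult_le_0_iff)
  next
    case False
    define f where "f w = E w * exp (K * w)" for w
    have "f z \<le> f c"
    proof (rule DERIV_nonneg_imp_nondecreasing[of z c f])
      show "z \<le> c" using False by simp
      fix w assume "z \<le> w" "w \<le> c"
      then have w: "p < w" "w < q" using c z by auto
      have "(f has_real_derivative (E' w + K * E w) * exp (K * w)) (at w)"
        unfolding f_def[abs_def] by (auto intro!: derivative_eq_intros deriv[OF w] simp: algebra_simps)
      moreover have "0 \<le> (E' w + K * E w) * exp (K * w)"
        using bound[OF w] by simp
      ultimately show "\<exists>y. DERIV f w :> y \<and> y \<ge> 0" by blast
    qed
    then show ?thesis using c(3) by (simp add: f_def mult_le_0_iff)
  qed
  then show ?thesis using nonneg[OF z] by simp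
qed

lemma has_derivative_at_0_if_quadratic_remainder:
  fixes f :: "'a::real_normed_vector \<Rightarrow> real"
  assumes L: "bounded_linear L" and r: "0 < r"
    and remainder: "\<And>h. norm h < r \<Longrightarrow> \<bar>f h - f 0 - L h\<bar> \<le> C * (norm h)\<^sup>2"
  shows "(f has_derivative L) (at 0)"
  unfolding has_derivative_iff_norm
proof (intro conjI L)
  show "((\<lambda>y. norm (f y - f 0 - L (y - 0)) / norm (y - 0)) \<longlongrightarrow> 0) (at 0)"
  proof (rule Lim_null_comparison)
    have "\<forall>\<^sub>F y in at 0. norm y < r"
      using r by (auto simp: eventually_at dist_norm intro!: exI[of _ r])
    then show "\<forall>\<^sub>F y in at 0. norm (norm (f y - f 0 - L (y - 0)) / norm (y - 0)) \<le> \<bar>C\<bar> * norm y"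
    proof (rule eventually_mono)
      fix y :: 'a assume y: "norm y < r"
      have "\<bar>f y - f 0 - L y\<bar> \<le> \<bar>C\<bar> * (norm y)\<^sup>2"
        using remainder[OF y] by (meson abs_ge_self mult_right_mono order_trans zero_le_power2)
      then have "\<bar>f y - f 0 - L y\<bar> / norm y \<le> \<bar>C\<bar> * (norm y)\<^sup>2 / norm y"
        by (intro divide_right_mono) auto
      also have "\<dots> \<le> \<bar>C\<bar> * norm y" by (cases "norm y = 0") (simp_all add: power2_eq_square)
      finally show "norm (norm (f y - f 0 - L (y - 0)) / norm (y - 0)) \<le> \<bar>C\<bar> * norm y"
        by simp
    qed
    show "((\<lambda>y. \<bar>C\<bar> * norm y) \<longlongrightarrow> 0) (at 0)"
      by (intro tendsto_eq_intros) (auto simp: tendsto_norm_zero_iff)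
  qed
qed

lemma continuous_on_if_lipschitz:
  fixes f :: "'a::real_normed_vector \<Rightarrow> real"
  assumes "0 \<le> C" "\<And>h h'. h \<in> S \<Longrightarrow> h' \<in> S \<Longrightarrow> \<bar>f h - f h'\<bar> \<le> C * norm (h - h')"
  shows "continuous_on S f"
  by (rule lipschitz_on_continuous_on[OF lipschitz_onI[of S f C]]) (use assms in \<open>auto simp: dist_norm\<close>)

lemma square_le_if_abs_le: "\<bar>p\<bar> \<le> K \<Longrightarrow> p\<^sup>2 \<le> K\<^sup>2" for p K :: real
  using power_mono[of "\<bar>p\<bar>" K 2] by simp

section \<open>Surjective derivatives\<close>

lemma interior_image_if_surj_derivative:
  fixes F :: "'a::euclidean_space \<Rightarrow> 'b::euclidean_space"
  assumes "open S" "x \<in> S" "continuous_on S F" and deriv: "(F has_derivative L) (at x)"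
    and "surj L"
  shows "F x \<in> interior (F ` S)"
proof -
  have "linear L" using has_derivative_bounded_linear[OF deriv] bounded_linear.linear by blast
  then obtain g where "linear g" "L \<circ> g = id"
    using linear_surjective_right_inverse \<open>surj L\<close> by blast
  then show ?thesis
    using sussmann_open_mapping[OF assms(1,3,2) deriv] assms(1,2)
    by (simp add: linear_conv_bounded_linear interior_open)
qed

lemma surj_combination_if_no_orthogonal:
  fixes c :: "'p \<Rightarrow> 'a::euclidean_space"
  assumes no_orth: "\<And>\<mu>. (\<forall>p\<in>A. \<mu> \<bullet> c p = 0) \<Longrightarrow> \<mu> = 0"
  obtains e :: "'a \<Rightarrow> 'p" where "\<And>i. i \<in> Basis \<Longrightarrow> e i \<in> A"
    "surj (\<lambda>h. \<Sum>i\<in>Basis. (h \<bullet> i) *\<^sub>R c (e i))"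
proof -
  have "dim (c ` A) = DIM('a)"
  proof (rule ccontr)
    assume "dim (c ` A) \<noteq> DIM('a)"
    then have "dim (c ` A) < DIM('a)" using dim_subset_UNIV[of "c ` A"] by simp
    then obtain \<mu> :: 'a where "\<mu> \<noteq> 0" "\<And>y. y \<in> span (c ` A) \<Longrightarrow> orthogonal \<mu> y"
      using orthogonal_to_subspace_exists by blast
    then show False using no_orth span_base unfolding orthogonal_def by blast
  qed
  obtain B where B: "B \<subseteq> c ` A" "independent B" "c ` A \<subseteq> span B" "card B = DIM('a)"
    using basis_exists \<open>dim (c ` A) = DIM('a)\<close> by metis
  have fin: "finite B" using B(4) card.infinite by fastforce
  have span_B: "span B = UNIV"
    using span_mono[OF B(3)] \<open>dim (c ` A) = DIM('a)\<close> dim_eq_full by (metis span_span top.extremum_uniqueI)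
  obtain f where f: "bij_betw f (Basis :: 'a set) B"
    using finite_same_card_bij[of "Basis :: 'a set" B] fin B(4) by auto
  have "\<forall>i\<in>Basis. \<exists>p\<in>A. c p = f i" using f B(1) by (force simp: bij_betw_def)
  then obtain e where e: "\<And>i. i \<in> Basis \<Longrightarrow> e i \<in> A \<and> c (e i) = f i" by metis
  show ?thesis
  proof (rule that)
    show "\<And>i. i \<in> Basis \<Longrightarrow> e i \<in> A" using e by blast
    show "surj (\<lambda>h. \<Sum>i\<in>Basis. (h \<bullet> i) *\<^sub>R c (e i))"
      unfolding surj_def
    proof
      fix y :: 'a
      obtain k where k: "y = (\<Sum>b\<in>B. k b *\<^sub>R b)"
        using span_B span_finite[OF fin] by auto
      have coord: "(\<Sum>j\<in>Basis. k (f j) *\<^sub>R j) \<bullet> i = k (f i)" if "i \<in> Basis" for i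
        using that by (simp add: inner_sum_left inner_Basis if_distrib cong: if_cong)
      have "(\<Sum>i\<in>Basis. ((\<Sum>j\<in>Basis. k (f j) *\<^sub>R j) \<bullet> i) *\<^sub>R c (e i)) = (\<Sum>i\<in>Basis. k (f i) *\<^sub>R f i)"
        by (rule sum.cong) (use coord e in auto)
      also have "\<dots> = y"
        using sum.reindex_bij_betw[OF f, of "\<lambda>b. k b *\<^sub>R b"] k by simp
      finally show "\<exists>h. y = (\<Sum>i\<in>Basis. (h \<bullet> i) *\<^sub>R c (e i))" by metis
    qed
  qed
qed

section \<open>Integrals and the functionals of the MECP\<close>

lemma bounded_borel_integrable_Icc:
  fixes f :: "real \<Rightarrow> real"
  assumes f: "f \<in> borel_measurable borel" and B: "\<And>s. s \<in> {p..q} \<Longrightarrow> \<bar>f s\<bar> \<le> B"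
  shows "set_integrable lborel {p..q} f" "f integrable_on {p..q}"
    "(LINT s:{p..q}|lborel. f s) = integral {p..q} f"
proof -
  show si: "set_integrable lborel {p..q} f"
    unfolding set_integrable_def
    by (rule integrableI_bounded_set_indicator[where B=B]) (use f B in \<open>auto, cases "p \<le> q", auto\<close>)
  show "f integrable_on {p..q}" "(LINT s:{p..q}|lborel. f s) = integral {p..q} f"
    using set_borel_integral_eq_integral[OF si] by auto
qed

lemma abs_integral_le:
  fixes f :: "real \<Rightarrow> real"
  assumes "0 \<le> T" "f integrable_on {0..T}" "\<And>s. s \<in> {0..T} \<Longrightarrow> \<bar>f s\<bar> \<le> B"
  shows "\<bar>integral {0..T} f\<bar> \<le> T * B"
proof -
  have "norm (integral {0..T} f) \<le> integral {0..T} (\<lambda>s. B)"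
    by (rule integral_norm_bound_integral) (use assms in auto)
  then show ?thesis using assms(1) by simp
qed

lemma integral_sum_mult_right:
  fixes g :: "'i \<Rightarrow> real \<Rightarrow> real"
  assumes "finite I" "\<And>i. i \<in> I \<Longrightarrow> g i integrable_on S"
  shows "integral S (\<lambda>s. \<Sum>i\<in>I. c i * g i s) = (\<Sum>i\<in>I. c i * integral S (g i))"
  using integral_sum[of I "\<lambda>i s. c i * g i s" S] assms by (simp add: integrable_on_mult_right)

lemma mecp_of_primitive:
  fixes f G :: "real \<Rightarrow> real"
  assumes T: "0 \<le> T" and f: "f \<in> borel_measurable borel" and B: "\<And>s. s \<in> {0..T} \<Longrightarrow> \<bar>f s\<bar> \<le> B"
    and G: "continuous_on {0..T} G" and prim: "\<And>s. s \<in> {0..T} \<Longrightarrow> (f has_integral (G s - G 0)) {0..s}"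
  shows "mecp_theta th0 f T = th0 + G T - G 0"
    "mecp_x x0 th0 f T = x0 + integral {0..T} (\<lambda>s. cos (th0 + G s - G 0))"
    "mecp_y y0 th0 f T = y0 + integral {0..T} (\<lambda>s. sin (th0 + G s - G 0))"
    "mecp_admissible T f"
    "mecp_cost T f = integral {0..T} (\<lambda>s. (f s)\<^sup>2 / 2)"
proof -
  have th: "mecp_theta th0 f s = th0 + G s - G 0" if s: "s \<in> {0..T}" for s
  proof -
    have "(LINT z:{0..s}|lborel. f z) = integral {0..s} f"
      using bounded_borel_integrable_Icc(3)[OF f, of 0 s B] B s by simp
    also have "\<dots> = G s - G 0" using prim[OF s] by (simp add: integral_unique)
    finally show ?thesis by (simp add: mecp_theta_def)
  qed
  then show "mecp_theta th0 f T = th0 + G T - G 0" using T by simp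
  have "(LINT s:{0..T}|lborel. g (mecp_theta th0 f s)) = integral {0..T} (\<lambda>s. g (th0 + G s - G 0))"
    if g: "continuous_on UNIV g" for g :: "real \<Rightarrow> real"
  proof -
    have "continuous_on {0..T} (\<lambda>s. g (th0 + G s - G 0))"
      by (rule continuous_on_compose2[OF g]) (auto intro!: continuous_intros G)
    note set_borel_integral_eq_integral(2)[OF borel_integrable_atLeastAtMost'[OF this]]
    then show ?thesis
      using th by (subst set_lebesgue_integral_cong[where g="\<lambda>s. g (th0 + G s - G 0)"]) auto
  qed
  then show "mecp_x x0 th0 f T = x0 + integral {0..T} (\<lambda>s. cos (th0 + G s - G 0))"
    "mecp_y y0 th0 f T = y0 + integral {0..T} (\<lambda>s. sin (th0 + G s - G 0))"
    by (simp_all add: mecp_x_def mecp_y_def continuous_on_cos continuous_on_sin)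
  have B2: "\<bar>(f s)\<^sup>2\<bar> \<le> B\<^sup>2" and B3: "\<bar>(f s)\<^sup>2 / 2\<bar> \<le> B\<^sup>2 / 2" if "s \<in> {0..T}" for s
    using power_mono[OF B[OF that] abs_ge_zero, of 2] by simp_all
  have f2: "(\<lambda>s. (f s)\<^sup>2) \<in> borel_measurable borel" and f3: "(\<lambda>s. (f s)\<^sup>2 / 2) \<in> borel_measurable borel"
    using f by measurable
  show "mecp_admissible T f"
    unfolding mecp_admissible_def
    using bounded_borel_integrable_Icc(1)[OF f B] bounded_borel_integrable_Icc(1)[OF f2 B2] by simp
  show "mecp_cost T f = integral {0..T} (\<lambda>s. (f s)\<^sup>2 / 2)"
    unfolding mecp_cost_def using bounded_borel_integrable_Icc(3)[OF f3 B3] by simp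
qed

section \<open>Tents\<close>

definition clip :: "real \<Rightarrow> real \<Rightarrow> real \<Rightarrow> real" where
  "clip p q s = max p (min s q)"

lemma clip_in: "p \<le> q \<Longrightarrow> clip p q s \<in> {p..q}"
  by (auto simp: clip_def)

lemma abs_clip_diff_le: "\<bar>clip p q s - clip p q z\<bar> \<le> \<bar>s - z\<bar>"
  by (auto simp: clip_def)

lemma continuous_on_clip: "continuous_on S (clip p q)"
  unfolding clip_def[abs_def] by (intro continuous_intros)

lemma has_real_derivative_clip:
  assumes "p \<le> q" "s \<noteq> p" "s \<noteq> q" and G: "(G has_real_derivative D) (at s)"
  shows "((\<lambda>z. G (clip p q z)) has_real_derivative (if p < s \<and> s < q then D else 0)) (at s)"
proof -
  consider "s < p" | "p < s \<and> s < q" | "q < s" using assms by linarith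
  then show ?thesis
  proof cases
    case 1
    have "((\<lambda>z. G p) has_real_derivative 0) (at s)" by simp
    then have "((\<lambda>z. G (clip p q z)) has_real_derivative 0) (at s)"
      by (rule has_field_derivative_transform_within_open[of _ _ _ "{..<p}"])
         (use 1 assms in \<open>auto simp: clip_def\<close>)
    then show ?thesis using 1 by simp
  next
    case 2
    have "((\<lambda>z. G (clip p q z)) has_real_derivative D) (at s)"
      by (rule has_field_derivative_transform_within_open[OF G, of "{p<..<q}"])
         (use 2 in \<open>auto simp: clip_def\<close>)
    then show ?thesis using 2 by simp
  next
    case 3
    have "((\<lambda>z. G q) has_real_derivative 0) (at s)" by simp
    then have "((\<lambda>z. G (clip p q z)) has_real_derivative 0) (at s)"
      by (rule has_field_derivative_transform_within_open[of _ _ _ "{q<..}"])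
         (use 3 assms in \<open>auto simp: clip_def\<close>)
    then show ?thesis using 3 assms by simp
  qed
qed

text \<open>The tent of height 1 over [c - dl, c + dr] with peak at c, and its derivative.\<close>

definition tent :: "real \<Rightarrow> real \<Rightarrow> real \<Rightarrow> real \<Rightarrow> real" where
  "tent c dl dr s = (clip (c - dl) c s - (c - dl)) / dl - (clip c (c + dr) s - c) / dr"

definition tent_slope :: "real \<Rightarrow> real \<Rightarrow> real \<Rightarrow> real \<Rightarrow> real" where
  "tent_slope c dl dr s =
     (if c - dl < s \<and> s < c then 1 / dl else 0) - (if c < s \<and> s < c + dr then 1 / dr else 0)"

context
  fixes c dl dr :: real
  assumes dl: "0 < dl" and dr: "0 < dr"
begin

lemma tent_eq:
  "s \<le> c - dl \<Longrightarrow> tent c dl dr s = 0"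
  "c - dl \<le> s \<Longrightarrow> s \<le> c \<Longrightarrow> tent c dl dr s = (s - (c - dl)) / dl"
  "c \<le> s \<Longrightarrow> s \<le> c + dr \<Longrightarrow> tent c dl dr s = (c + dr - s) / dr"
  "c + dr \<le> s \<Longrightarrow> tent c dl dr s = 0"
  using dl dr by (auto simp: tent_def clip_def field_simps)

lemma tent_nonneg: "0 \<le> tent c dl dr s"
  and tent_le_one: "tent c dl dr s \<le> 1"
proof -
  consider "s \<le> c - dl" | "c - dl \<le> s \<and> s \<le> c" | "c \<le> s \<and> s \<le> c + dr" | "c + dr \<le> s"
    by linarith
  then have "0 \<le> tent c dl dr s \<and> tent c dl dr s \<le> 1"
    by cases (use tent_eq dl dr in \<open>auto simp: divide_le_eq_1_pos\<close>)
  then show "0 \<le> tent c dl dr s" "tent c dl dr s \<le> 1" by auto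
qed

lemma tent_support: "tent c dl dr s \<noteq> 0 \<Longrightarrow> c - dl < s \<and> s < c + dr"
  using tent_eq(1)[of s] tent_eq(4)[of s] by (meson not_le)

lemma abs_tent_slope_le: "\<bar>tent_slope c dl dr s\<bar> \<le> 1 / dl + 1 / dr"
  using dl dr by (auto simp: tent_slope_def)

lemma continuous_on_tent: "continuous_on S (tent c dl dr)"
  unfolding tent_def[abs_def] by (intro continuous_intros continuous_on_clip) (use dl dr in auto)

lemma tent_slope_measurable: "tent_slope c dl dr \<in> borel_measurable borel"
  unfolding tent_slope_def[abs_def] by measurable

lemma has_real_derivative_tent:
  assumes "s \<noteq> c - dl" "s \<noteq> c" "s \<noteq> c + dr"
  shows "(tent c dl dr has_real_derivative tent_slope c dl dr s) (at s)"
proof -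
  have d1: "((\<lambda>z. (z - (c - dl)) / dl) has_real_derivative 1 / dl) (at s)"
    and d2: "((\<lambda>z. (z - c) / dr) has_real_derivative 1 / dr) (at s)"
    using dl dr by (auto intro!: derivative_eq_intros)
  show ?thesis
    unfolding tent_def[abs_def] tent_slope_def
    by (intro DERIV_diff has_real_derivative_clip[OF _ _ _ d1, simplified]
        has_real_derivative_clip[OF _ _ _ d2, simplified])
       (use assms dl dr in auto)
qed

lemma tent_slope_has_integral:
  "0 \<le> s \<Longrightarrow> (tent_slope c dl dr has_integral (tent c dl dr s - tent c dl dr 0)) {0..s}"
  by (rule fundamental_theorem_of_calculus_interior_strong[of "{c - dl, c, c + dr}"])
     (auto intro!: has_real_derivative_tent[unfolded has_real_derivative_iff_has_vector_derivative]
       continuous_on_tent)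

lemma tent_has_integral:
  assumes "0 < c - dl" "c + dr < T"
  shows "(tent c dl dr has_integral (dl + dr) / 2) {0..T}"
proof -
  define A where "A m = (m - c + dl)\<^sup>2 / (2 * dl)" for m
  define B where "B m = (dr\<^sup>2 - (c + dr - m)\<^sup>2) / (2 * dr)" for m
  define \<Psi> where "\<Psi> s = A (clip (c - dl) c s) + B (clip c (c + dr) s)" for s
  have dA: "(A has_real_derivative (s - c + dl) / dl) (at s)" for s
    unfolding A_def[abs_def] using dl by (auto intro!: derivative_eq_intros simp: field_simps)
  have dB: "(B has_real_derivative (c + dr - s) / dr) (at s)" for s
    unfolding B_def[abs_def] using dr by (auto intro!: derivative_eq_intros simp: field_simps)
  have d\<Psi>: "(\<Psi> has_real_derivative tent c dl dr s) (at s)"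
    if s: "s \<noteq> c - dl" "s \<noteq> c" "s \<noteq> c + dr" for s
  proof -
    have "(\<Psi> has_real_derivative (if c - dl < s \<and> s < c then (s - c + dl) / dl else 0)
        + (if c < s \<and> s < c + dr then (c + dr - s) / dr else 0)) (at s)"
      unfolding \<Psi>_def[abs_def]
      by (intro DERIV_add has_real_derivative_clip[OF _ _ _ dA] has_real_derivative_clip[OF _ _ _ dB])
         (use s dl dr in auto)
    moreover have "(if c - dl < s \<and> s < c then (s - c + dl) / dl else 0)
        + (if c < s \<and> s < c + dr then (c + dr - s) / dr else 0) = tent c dl dr s"
    proof -
      consider "s < c - dl" | "c - dl < s \<and> s < c" | "c < s \<and> s < c + dr" | "c + dr < s"
        using s by linarith
      then show ?thesis by cases (use tent_eq dl dr in auto)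
    qed
    ultimately show ?thesis by simp
  qed
  have "continuous_on {0..T} \<Psi>"
    unfolding \<Psi>_def[abs_def] A_def B_def
    by (intro continuous_intros continuous_on_clip) (use dl dr in auto)
  then have "(tent c dl dr has_integral (\<Psi> T - \<Psi> 0)) {0..T}"
    by (intro fundamental_theorem_of_calculus_interior_strong[of "{c - dl, c, c + dr}"])
       (use assms dl dr d\<Psi> in \<open>auto simp: has_real_derivative_iff_has_vector_derivative[symmetric]\<close>)
  moreover have "\<Psi> T - \<Psi> 0 = (dl + dr) / 2"
    using assms dl dr by (simp add: \<Psi>_def A_def B_def clip_def power2_eq_square field_simps)
  ultimately show ?thesis by simp
qed

end

section \<open>First variation of the endpoint and the cost\<close>

type_synonym R4 = "real \<times> real \<times> real \<times> real"

text \<open>The reference control v with angle th is perturbed to v + (\<Sum>i. (h \<bullet> i) * w i),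
  which moves the angle by \<Sum>i. (h \<bullet> i) * W i.  That W i is a primitive of w i is only
  assumed in mecp_perturbed_control; the first variation needs just the bounds.\<close>

locale endpoint_perturbation =
  fixes T Vb Kw :: real and th v :: "real \<Rightarrow> real" and W w :: "R4 \<Rightarrow> real \<Rightarrow> real"
  assumes T_pos: "0 < T"
    and cont_th: "continuous_on {0..T} th"
    and v_measurable: "v \<in> borel_measurable borel"
    and v_bound: "\<And>s. s \<in> {0..T} \<Longrightarrow> \<bar>v s\<bar> \<le> Vb"
    and W_cont: "\<And>i. i \<in> Basis \<Longrightarrow> continuous_on {0..T} (W i)"
    and w_measurable: "\<And>i. i \<in> Basis \<Longrightarrow> w i \<in> borel_measurable borel"
    and W_bound: "\<And>i s. i \<in> Basis \<Longrightarrow> s \<in> {0..T} \<Longrightarrow> \<bar>W i s\<bar> \<le> Kw"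
    and w_bound: "\<And>i s. i \<in> Basis \<Longrightarrow> s \<in> {0..T} \<Longrightarrow> \<bar>w i s\<bar> \<le> Kw"
begin

definition angle_pert :: "R4 \<Rightarrow> real \<Rightarrow> real" where
  "angle_pert h s = (\<Sum>i\<in>Basis. (h \<bullet> i) * W i s)"

definition control_pert :: "R4 \<Rightarrow> real \<Rightarrow> real" where
  "control_pert h s = (\<Sum>i\<in>Basis. (h \<bullet> i) * w i s)"

definition disp :: "(real \<Rightarrow> real) \<Rightarrow> R4 \<Rightarrow> real" where
  "disp g h = integral {0..T} (\<lambda>s. g (th s + angle_pert h s))"

definition cost :: "R4 \<Rightarrow> real" where
  "cost h = integral {0..T} (\<lambda>s. (v s + control_pert h s)\<^sup>2 / 2)"

definition endpoint_map :: "R4 \<Rightarrow> R4" where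
  "endpoint_map h = (disp cos h, disp sin h, angle_pert h T, cost h)"

definition first_variation :: "R4 \<Rightarrow> R4" where
  "first_variation i =
    (integral {0..T} (\<lambda>s. - sin (th s) * W i s), integral {0..T} (\<lambda>s. cos (th s) * W i s),
     W i T, integral {0..T} (\<lambda>s. v s * w i s))"

definition endpoint_deriv :: "R4 \<Rightarrow> R4" where
  "endpoint_deriv h = (\<Sum>i\<in>Basis. (h \<bullet> i) *\<^sub>R first_variation i)"

definition Kpert :: real where
  "Kpert = 4 * Kw"

lemma Kpert_nonneg: "0 \<le> Kpert"
proof -
  obtain i :: R4 where "i \<in> Basis" using nonempty_Basis by blast
  then show ?thesis using W_bound[of i 0] T_pos by (force simp: Kpert_def)
qed

lemma Vb_nonneg: "0 \<le> Vb"
  using v_bound[of 0] T_pos by force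

lemma abs_basis_sum_le:
  fixes g :: "R4 \<Rightarrow> real"
  assumes "\<And>i. i \<in> Basis \<Longrightarrow> \<bar>g i\<bar> \<le> Kw"
  shows "\<bar>\<Sum>i\<in>Basis. (h \<bullet> i) * g i\<bar> \<le> Kpert * norm h"
proof -
  have "\<bar>\<Sum>i\<in>Basis. (h \<bullet> i) * g i\<bar> \<le> (\<Sum>i\<in>Basis. \<bar>(h \<bullet> i) * g i\<bar>)" by (rule sum_abs)
  also have "\<dots> \<le> (\<Sum>i\<in>(Basis::R4 set). norm h * Kw)"
  proof (rule sum_mono)
    fix i :: R4 assume i: "i \<in> Basis"
    show "\<bar>(h \<bullet> i) * g i\<bar> \<le> norm h * Kw"
      unfolding abs_mult by (intro mult_mono Basis_le_norm i assms) auto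
  qed
  also have "\<dots> = Kpert * norm h" by (simp add: Kpert_def)
  finally show ?thesis .
qed

lemma abs_angle_pert_le: "s \<in> {0..T} \<Longrightarrow> \<bar>angle_pert h s\<bar> \<le> Kpert * norm h"
  unfolding angle_pert_def by (rule abs_basis_sum_le) (rule W_bound)

lemma abs_control_pert_le: "s \<in> {0..T} \<Longrightarrow> \<bar>control_pert h s\<bar> \<le> Kpert * norm h"
  unfolding control_pert_def by (rule abs_basis_sum_le) (rule w_bound)

lemma angle_pert_diff: "angle_pert h s - angle_pert h' s = angle_pert (h - h') s"
  by (simp add: angle_pert_def inner_diff_left algebra_simps sum_subtractf)

lemma control_pert_diff: "control_pert h s - control_pert h' s = control_pert (h - h') s"
  by (simp add: control_pert_def inner_diff_left algebra_simps sum_subtractf)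

lemma angle_pert_0 [simp]: "angle_pert 0 s = 0"
  by (simp add: angle_pert_def)

lemma control_pert_0 [simp]: "control_pert 0 s = 0"
  by (simp add: control_pert_def)

lemma continuous_on_angle_pert: "continuous_on {0..T} (angle_pert h)"
  unfolding angle_pert_def[abs_def] by (intro continuous_intros W_cont) auto

lemma control_pert_measurable: "control_pert h \<in> borel_measurable borel"
  unfolding control_pert_def[abs_def] using w_measurable by measurable

definition bounded_dom :: "(real \<Rightarrow> real) \<Rightarrow> bool" where
  "bounded_dom f \<longleftrightarrow> (\<exists>B. \<forall>s\<in>{0..T}. \<bar>f s\<bar> \<le> B)"

lemma bounded_dom_add: "bounded_dom f \<Longrightarrow> bounded_dom g \<Longrightarrow> bounded_dom (\<lambda>s. f s + g s)"
  unfolding bounded_dom_def by (metis abs_triangle_ineq add_mono order_trans)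

lemma bounded_dom_mult: "bounded_dom f \<Longrightarrow> bounded_dom g \<Longrightarrow> bounded_dom (\<lambda>s. f s * g s)"
proof -
  assume "bounded_dom f" "bounded_dom g"
  then obtain A B where A: "\<forall>s\<in>{0..T}. \<bar>f s\<bar> \<le> A" and B: "\<forall>s\<in>{0..T}. \<bar>g s\<bar> \<le> B"
    unfolding bounded_dom_def by blast
  have "\<bar>f s * g s\<bar> \<le> A * B" if "s \<in> {0..T}" for s
    unfolding abs_mult using A B that by (intro mult_mono) auto
  then show ?thesis unfolding bounded_dom_def by blast
qed

lemma bounded_dom_half_square: "bounded_dom f \<Longrightarrow> bounded_dom (\<lambda>s. (f s)\<^sup>2 / 2)"
proof -
  assume "bounded_dom f"
  then obtain A where A: "\<forall>s\<in>{0..T}. \<bar>f s\<bar> \<le> A" unfolding bounded_dom_def by blast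
  have "\<bar>(f s)\<^sup>2 / 2\<bar> \<le> A\<^sup>2 / 2" if "s \<in> {0..T}" for s
    using power_mono[of "\<bar>f s\<bar>" A 2] A that by simp
  then show ?thesis unfolding bounded_dom_def by blast
qed

lemma bounded_dom_v: "bounded_dom v"
  unfolding bounded_dom_def using v_bound by blast

lemma bounded_dom_control_pert: "bounded_dom (control_pert h)"
  unfolding bounded_dom_def using abs_control_pert_le by blast

lemma bounded_dom_w: "i \<in> Basis \<Longrightarrow> bounded_dom (w i)"
  unfolding bounded_dom_def using w_bound by blast

lemma integrable_if_bounded_dom:
  "f \<in> borel_measurable borel \<Longrightarrow> bounded_dom f \<Longrightarrow> f integrable_on {0..T}"
  unfolding bounded_dom_def using bounded_borel_integrable_Icc(2) by blast

lemma endpoint_deriv_eq: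
  "endpoint_deriv h =
    (integral {0..T} (\<lambda>s. - sin (th s) * angle_pert h s), integral {0..T} (\<lambda>s. cos (th s) * angle_pert h s),
     angle_pert h T, integral {0..T} (\<lambda>s. v s * control_pert h s))"
proof -
  have angle: "integral {0..T} (\<lambda>s. g (th s) * angle_pert h s)
      = (\<Sum>i\<in>Basis. (h \<bullet> i) * integral {0..T} (\<lambda>s. g (th s) * W i s))"
    if "continuous_on UNIV g" for g
  proof -
    have "integral {0..T} (\<lambda>s. g (th s) * angle_pert h s)
        = integral {0..T} (\<lambda>s. \<Sum>i\<in>Basis. (h \<bullet> i) * (g (th s) * W i s))"
      by (simp add: angle_pert_def sum_distrib_left algebra_simps)
    also have "\<dots> = (\<Sum>i\<in>Basis. (h \<bullet> i) * integral {0..T} (\<lambda>s. g (th s) * W i s))"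
      by (rule integral_sum_mult_right)
         (auto intro!: integrable_continuous_real continuous_intros cont_th W_cont
           continuous_on_compose2[OF that])
    finally show ?thesis .
  qed
  have control: "integral {0..T} (\<lambda>s. v s * control_pert h s)
      = (\<Sum>i\<in>Basis. (h \<bullet> i) * integral {0..T} (\<lambda>s. v s * w i s))"
  proof -
    have "integral {0..T} (\<lambda>s. v s * control_pert h s)
        = integral {0..T} (\<lambda>s. \<Sum>i\<in>Basis. (h \<bullet> i) * (v s * w i s))"
      by (simp add: control_pert_def sum_distrib_left algebra_simps)
    also have "\<dots> = (\<Sum>i\<in>Basis. (h \<bullet> i) * integral {0..T} (\<lambda>s. v s * w i s))"
    proof (rule integral_sum_mult_right)
      fix i :: R4 assume i: "i \<in> Basis"
      show "(\<lambda>s. v s * w i s) integrable_on {0..T}"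
        by (rule integrable_if_bounded_dom)
           (use v_measurable w_measurable[OF i] bounded_dom_mult[OF bounded_dom_v bounded_dom_w[OF i]]
             in measurable)
    qed simp
    finally show ?thesis .
  qed
  have "continuous_on UNIV (\<lambda>t::real. - sin t)" "continuous_on UNIV (cos :: real \<Rightarrow> real)"
    by (intro continuous_intros)+
  from this[THEN angle] show ?thesis
    unfolding endpoint_deriv_def control
    by (simp add: prod_eq_iff fst_sum snd_sum first_variation_def angle_pert_def)
qed

lemma bounded_linear_endpoint_deriv: "bounded_linear endpoint_deriv"
  unfolding endpoint_deriv_def
  by (intro bounded_linear_sum bounded_linear_compose[OF bounded_linear_scaleR_left bounded_linear_inner_left])

lemma has_derivative_disp:
  assumes g: "continuous_on UNIV g" and g': "continuous_on UNIV g'"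
    and remainder: "\<And>t p. \<bar>g (t + p) - g t - g' t * p\<bar> \<le> p\<^sup>2"
  shows "(disp g has_derivative (\<lambda>h. integral {0..T} (\<lambda>s. g' (th s) * angle_pert h s))) (at 0)"
proof (rule has_derivative_at_0_if_quadratic_remainder[where r=1 and C="T * Kpert\<^sup>2"])
  have cont: "continuous_on {0..T} (\<lambda>s. f (th s + angle_pert h s))"
    if "continuous_on UNIV f" for f h
    by (intro continuous_on_compose2[OF that] continuous_intros cont_th continuous_on_angle_pert) auto
  have cont': "continuous_on {0..T} (\<lambda>s. g' (th s) * angle_pert h s)" for h
    by (intro continuous_on_compose2[OF g'] continuous_intros cont_th continuous_on_angle_pert) auto
  show "bounded_linear (\<lambda>h. integral {0..T} (\<lambda>s. g' (th s) * angle_pert h s))"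
  proof (rule bounded_linearI')
    show "integral {0..T} (\<lambda>s. g' (th s) * angle_pert (h + h') s)
        = integral {0..T} (\<lambda>s. g' (th s) * angle_pert h s) + integral {0..T} (\<lambda>s. g' (th s) * angle_pert h' s)"
      for h h'
      using integral_add[OF integrable_continuous_real[OF cont' [of h]] integrable_continuous_real[OF cont' [of h']]]
      by (simp add: angle_pert_def inner_add_left sum.distrib distrib_left distrib_right)
    show "integral {0..T} (\<lambda>s. g' (th s) * angle_pert (c *\<^sub>R h) s)
        = c *\<^sub>R integral {0..T} (\<lambda>s. g' (th s) * angle_pert h s)" for c h
      by (simp add: angle_pert_def sum_distrib_left algebra_simps flip: integral_mult_right)
  qed
  show "(0::real) < 1" by simp
  fix h :: R4
  have "disp g h - disp g 0 - integral {0..T} (\<lambda>s. g' (th s) * angle_pert h s)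
      = integral {0..T} (\<lambda>s. g (th s + angle_pert h s) - g (th s) - g' (th s) * angle_pert h s)"
    using cont[OF g, of h] cont[OF g, of 0] cont'[of h] unfolding disp_def
    by (simp add: integral_diff integrable_diff integrable_continuous_real)
  also have "\<bar>\<dots>\<bar> \<le> T * (Kpert * norm h)\<^sup>2"
  proof (rule abs_integral_le)
    show "(\<lambda>s. g (th s + angle_pert h s) - g (th s) - g' (th s) * angle_pert h s) integrable_on {0..T}"
      using cont[OF g, of h] cont[OF g, of 0] cont'[of h]
      by (simp add: integrable_diff integrable_continuous_real)
    fix s assume s: "s \<in> {0..T}"
    show "\<bar>g (th s + angle_pert h s) - g (th s) - g' (th s) * angle_pert h s\<bar> \<le> (Kpert * norm h)\<^sup>2"
      using remainder[of "th s" "angle_pert h s"] square_le_if_abs_le[OF abs_angle_pert_le[OF s, of h]]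
      by linarith
  qed (use T_pos in simp)
  finally show "\<bar>disp g h - disp g 0 - integral {0..T} (\<lambda>s. g' (th s) * angle_pert h s)\<bar>
      \<le> T * Kpert\<^sup>2 * (norm h)\<^sup>2"
    by (simp add: power_mult_distrib mult.assoc)
qed

lemma has_derivative_cost:
  "(cost has_derivative (\<lambda>h. integral {0..T} (\<lambda>s. v s * control_pert h s))) (at 0)"
proof (rule has_derivative_at_0_if_quadratic_remainder[where r=1 and C="T * Kpert\<^sup>2"])
  show "bounded_linear (\<lambda>h. integral {0..T} (\<lambda>s. v s * control_pert h s))"
    using bounded_linear_compose[OF bounded_linear_snd
        bounded_linear_compose[OF bounded_linear_snd
          bounded_linear_compose[OF bounded_linear_snd bounded_linear_endpoint_deriv]]]
    by (simp add: endpoint_deriv_eq)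
  show "(0::real) < 1" by simp
  fix h :: R4
  note meas = v_measurable control_pert_measurable[of h]
  have i1: "(\<lambda>s. (v s + control_pert h s)\<^sup>2 / 2) integrable_on {0..T}"
    by (rule integrable_if_bounded_dom)
       (use meas bounded_dom_half_square[OF bounded_dom_add[OF bounded_dom_v bounded_dom_control_pert]]
         in measurable)
  have i2: "(\<lambda>s. (v s)\<^sup>2 / 2) integrable_on {0..T}"
    by (rule integrable_if_bounded_dom) (use meas bounded_dom_half_square[OF bounded_dom_v] in measurable)
  have i3: "(\<lambda>s. v s * control_pert h s) integrable_on {0..T}"
    by (rule integrable_if_bounded_dom)
       (use meas bounded_dom_mult[OF bounded_dom_v bounded_dom_control_pert] in measurable)
  have i4: "(\<lambda>s. (control_pert h s)\<^sup>2 / 2) integrable_on {0..T}"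
    by (rule integrable_if_bounded_dom)
       (use meas bounded_dom_half_square[OF bounded_dom_control_pert] in measurable)
  have "cost h - cost 0 - integral {0..T} (\<lambda>s. v s * control_pert h s)
      = integral {0..T} (\<lambda>s. (v s + control_pert h s)\<^sup>2 / 2 - (v s)\<^sup>2 / 2 - v s * control_pert h s)"
    unfolding cost_def using i1 i2 i3 by (simp add: integral_diff integrable_diff)
  also have "\<dots> = integral {0..T} (\<lambda>s. (control_pert h s)\<^sup>2 / 2)"
    by (rule integral_cong) (simp add: power2_eq_square algebra_simps)
  also have "\<bar>\<dots>\<bar> \<le> T * (Kpert * norm h)\<^sup>2"
  proof (rule abs_integral_le[OF _ i4])
    fix s assume s: "s \<in> {0..T}"
    have "\<bar>(control_pert h s)\<^sup>2 / 2\<bar> = (control_pert h s)\<^sup>2 / 2" by simp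
    then show "\<bar>(control_pert h s)\<^sup>2 / 2\<bar> \<le> (Kpert * norm h)\<^sup>2"
      using square_le_if_abs_le[OF abs_control_pert_le[OF s, of h]] zero_le_power2[of "control_pert h s"]
      by linarith
  qed (use T_pos in simp)
  finally show "\<bar>cost h - cost 0 - integral {0..T} (\<lambda>s. v s * control_pert h s)\<bar>
      \<le> T * Kpert\<^sup>2 * (norm h)\<^sup>2"
    by (simp add: power_mult_distrib mult.assoc)
qed

lemma has_derivative_endpoint_map: "(endpoint_map has_derivative endpoint_deriv) (at 0)"
proof -
  have "((\<lambda>h. angle_pert h T) has_derivative (\<lambda>h. angle_pert h T)) (at 0)"
    using bounded_linear_compose[OF bounded_linear_fst
        bounded_linear_compose[OF bounded_linear_snd
          bounded_linear_compose[OF bounded_linear_snd bounded_linear_endpoint_deriv]]]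
    by (intro bounded_linear_imp_has_derivative) (simp add: endpoint_deriv_eq)
  moreover have "(disp cos has_derivative (\<lambda>h. integral {0..T} (\<lambda>s. - sin (th s) * angle_pert h s))) (at 0)"
    using abs_cos_add_remainder_le by (intro has_derivative_disp continuous_intros) simp
  moreover have "(disp sin has_derivative (\<lambda>h. integral {0..T} (\<lambda>s. cos (th s) * angle_pert h s))) (at 0)"
    using abs_sin_add_remainder_le by (intro has_derivative_disp continuous_intros)
  ultimately show ?thesis
    unfolding endpoint_map_def[abs_def] endpoint_deriv_eq[abs_def]
    by (intro has_derivative_Pair has_derivative_cost)
qed

lemma continuous_on_disp:
  assumes g: "continuous_on UNIV g" and lip: "\<And>z t. \<bar>g z - g t\<bar> \<le> \<bar>z - t\<bar>"
  shows "continuous_on S (disp g)"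
proof (rule continuous_on_if_lipschitz[where C="T * Kpert"])
  show "0 \<le> T * Kpert" using T_pos Kpert_nonneg by simp
  fix h h' :: R4
  have cont: "continuous_on {0..T} (\<lambda>s. g (th s + angle_pert h s))" for h
    by (intro continuous_on_compose2[OF g] continuous_intros cont_th continuous_on_angle_pert) auto
  have "disp g h - disp g h' = integral {0..T} (\<lambda>s. g (th s + angle_pert h s) - g (th s + angle_pert h' s))"
    unfolding disp_def by (rule integral_diff[symmetric]) (intro integrable_continuous_real cont)+
  also have "\<bar>\<dots>\<bar> \<le> T * (Kpert * norm (h - h'))"
  proof (rule abs_integral_le)
    show "(\<lambda>s. g (th s + angle_pert h s) - g (th s + angle_pert h' s)) integrable_on {0..T}"
      by (intro integrable_continuous_real continuous_intros cont)
    fix s assume s: "s \<in> {0..T}"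
    have "\<bar>g (th s + angle_pert h s) - g (th s + angle_pert h' s)\<bar> \<le> \<bar>angle_pert h s - angle_pert h' s\<bar>"
      using lip[of "th s + angle_pert h s" "th s + angle_pert h' s"] by simp
    also have "\<dots> \<le> Kpert * norm (h - h')"
      unfolding angle_pert_diff by (rule abs_angle_pert_le[OF s])
    finally show "\<bar>g (th s + angle_pert h s) - g (th s + angle_pert h' s)\<bar> \<le> Kpert * norm (h - h')" .
  qed (use T_pos in simp)
  finally show "\<bar>disp g h - disp g h'\<bar> \<le> T * Kpert * norm (h - h')" by (simp add: mult.assoc)
qed

lemma continuous_on_cost: "continuous_on (ball 0 1) cost"
proof (rule continuous_on_if_lipschitz[where C="T * (Kpert * (Vb + Kpert))"])
  show "0 \<le> T * (Kpert * (Vb + Kpert))" using T_pos Kpert_nonneg Vb_nonneg by simp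
  fix h h' :: R4 assume h: "h \<in> ball 0 1" and h': "h' \<in> ball 0 1"
  have i1: "(\<lambda>s. (v s + control_pert h s)\<^sup>2 / 2) integrable_on {0..T}" for h
    by (rule integrable_if_bounded_dom)
       (use v_measurable control_pert_measurable[of h]
         bounded_dom_half_square[OF bounded_dom_add[OF bounded_dom_v bounded_dom_control_pert]]
         in measurable)
  have "cost h - cost h'
      = integral {0..T} (\<lambda>s. (v s + control_pert h s)\<^sup>2 / 2 - (v s + control_pert h' s)\<^sup>2 / 2)"
    unfolding cost_def by (rule integral_diff[symmetric, OF i1 i1])
  also have "\<bar>\<dots>\<bar> \<le> T * (Kpert * (Vb + Kpert) * norm (h - h'))"
  proof (rule abs_integral_le)
    show "(\<lambda>s. (v s + control_pert h s)\<^sup>2 / 2 - (v s + control_pert h' s)\<^sup>2 / 2) integrable_on {0..T}"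
      by (rule integrable_diff[OF i1 i1])
    fix s assume s: "s \<in> {0..T}"
    have factor: "(v s + control_pert h s)\<^sup>2 / 2 - (v s + control_pert h' s)\<^sup>2 / 2
        = control_pert (h - h') s * ((2 * v s + control_pert h s + control_pert h' s) / 2)"
      using control_pert_diff[of h s h'] by (simp add: power2_eq_square algebra_simps)
    have "norm h \<le> 1" "norm h' \<le> 1" using h h' by auto
    then have "\<bar>control_pert h s\<bar> \<le> Kpert" "\<bar>control_pert h' s\<bar> \<le> Kpert"
      using abs_control_pert_le[OF s, of h] abs_control_pert_le[OF s, of h'] Kpert_nonneg
      by (metis mult.right_neutral mult_left_mono order_trans)+
    then have "\<bar>(2 * v s + control_pert h s + control_pert h' s) / 2\<bar> \<le> Vb + Kpert"
      using v_bound[OF s] by simp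
    then have "\<bar>control_pert (h - h') s * ((2 * v s + control_pert h s + control_pert h' s) / 2)\<bar>
        \<le> (Kpert * norm (h - h')) * (Vb + Kpert)"
      unfolding abs_mult by (intro mult_mono abs_control_pert_le[OF s]) (auto intro: mult_nonneg_nonneg Kpert_nonneg)
    then show "\<bar>(v s + control_pert h s)\<^sup>2 / 2 - (v s + control_pert h' s)\<^sup>2 / 2\<bar>
        \<le> Kpert * (Vb + Kpert) * norm (h - h')"
      unfolding factor by (simp add: algebra_simps)
  qed (use T_pos in simp)
  finally show "\<bar>cost h - cost h'\<bar> \<le> T * (Kpert * (Vb + Kpert)) * norm (h - h')"
    by (simp add: mult.assoc)
qed

lemma continuous_on_endpoint_map: "continuous_on (ball 0 1) endpoint_map"
proof -
  have "continuous_on (ball 0 1) (\<lambda>h. angle_pert h T)"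
  proof (rule continuous_on_if_lipschitz[OF Kpert_nonneg])
    show "\<bar>angle_pert h T - angle_pert h' T\<bar> \<le> Kpert * norm (h - h')" for h h'
      unfolding angle_pert_diff using abs_angle_pert_le[of T] T_pos by simp
  qed
  then show ?thesis
    unfolding endpoint_map_def[abs_def]
    by (intro continuous_on_Pair continuous_on_disp continuous_on_cost continuous_intros)
       (simp_all add: abs_cos_diff_le abs_sin_diff_le)
qed

lemma cheaper_perturbation_if_surj:
  assumes "surj endpoint_deriv"
  obtains h \<epsilon> where "0 < \<epsilon>" "disp cos h = disp cos 0" "disp sin h = disp sin 0"
    "angle_pert h T = 0" "cost h = cost 0 - \<epsilon>"
proof -
  have "endpoint_map 0 \<in> interior (endpoint_map ` ball 0 1)"
    by (rule interior_image_if_surj_derivative[OF open_ball _ continuous_on_endpoint_map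
          has_derivative_endpoint_map assms]) simp
  then obtain e where e: "0 < e" "ball (endpoint_map 0) e \<subseteq> endpoint_map ` ball 0 1"
    using mem_interior by blast
  have "endpoint_map 0 - (0, 0, 0, e / 2) \<in> ball (endpoint_map 0) e"
    using e(1) by (simp add: dist_norm norm_Pair)
  then obtain h where "endpoint_map h = endpoint_map 0 - (0, 0, 0, e / 2)"
    using e(2) by (metis imageE subsetD)
  then show ?thesis
    using that[of "e / 2" h] e(1) by (simp add: endpoint_map_def)
qed

lemma mecp_perturbed_control:
  assumes prim_w: "\<And>i s. i \<in> Basis \<Longrightarrow> s \<in> {0..T} \<Longrightarrow> (w i has_integral W i s) {0..s}"
    and prim_v: "\<And>s. s \<in> {0..T} \<Longrightarrow> (v has_integral (th s - th 0)) {0..s}"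
  shows "mecp_theta (th 0) (\<lambda>s. v s + control_pert h s) T = th T + angle_pert h T"
    "mecp_x x0 (th 0) (\<lambda>s. v s + control_pert h s) T = x0 + disp cos h"
    "mecp_y y0 (th 0) (\<lambda>s. v s + control_pert h s) T = y0 + disp sin h"
    "mecp_admissible T (\<lambda>s. v s + control_pert h s)"
    "mecp_cost T (\<lambda>s. v s + control_pert h s) = cost h"
proof -
  have prim: "(control_pert h has_integral angle_pert h s) {0..s}" if "s \<in> {0..T}" for s
    unfolding control_pert_def[abs_def] angle_pert_def
    by (intro has_integral_sum has_integral_mult_right prim_w that) auto
  have "(control_pert h has_integral 0) {0..0}" by (rule has_integral_null_real) simp
  then have angle_pert_at_0: "angle_pert h 0 = 0"
    using has_integral_unique prim[of 0] T_pos by auto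
  define G where "G s = th s + angle_pert h s" for s
  have bound: "\<bar>v s + control_pert h s\<bar> \<le> Vb + Kpert * norm h" if "s \<in> {0..T}" for s
    using v_bound[OF that] abs_control_pert_le[OF that, of h] by linarith
  have prim_vh: "((\<lambda>s. v s + control_pert h s) has_integral (G s - G 0)) {0..s}" if "s \<in> {0..T}" for s
    using has_integral_add[OF prim_v[OF that] prim[OF that]] angle_pert_at_0
    by (simp add: G_def algebra_simps)
  have cont: "continuous_on {0..T} G"
    unfolding G_def[abs_def] by (intro continuous_intros cont_th continuous_on_angle_pert)
  have meas: "(\<lambda>s. v s + control_pert h s) \<in> borel_measurable borel"
    using v_measurable control_pert_measurable[of h] by measurable
  note mecp = mecp_of_primitive[OF _ meas bound cont prim_vh]
  have G_shift: "th 0 + G s - G 0 = th s + angle_pert h s" for s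
    using angle_pert_at_0 by (simp add: G_def)
  show "mecp_theta (th 0) (\<lambda>s. v s + control_pert h s) T = th T + angle_pert h T"
    "mecp_x x0 (th 0) (\<lambda>s. v s + control_pert h s) T = x0 + disp cos h"
    "mecp_y y0 (th 0) (\<lambda>s. v s + control_pert h s) T = y0 + disp sin h"
    "mecp_admissible T (\<lambda>s. v s + control_pert h s)"
    "mecp_cost T (\<lambda>s. v s + control_pert h s) = cost h"
    using mecp T_pos by (simp_all add: G_shift disp_def cost_def)
qed

end

section \<open>The extremal and its reflected arc\<close>

text \<open>The extremal in forward time, (x s, y s, th s) = Z (T - s); the corners a < b are the colinear
  instants T - t2 < T - t1.\<close>

locale colinear_extremal =
  fixes T px py c0 a b :: real and th x y :: "real \<Rightarrow> real"
  assumes corners: "0 < a" "a < b" "b < T"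
    and cont_th: "continuous_on {0..T} th"
    and cont_x: "continuous_on {0..T} x"
    and cont_y: "continuous_on {0..T} y"
    and deriv_th: "\<And>s. 0 < s \<Longrightarrow> s < T \<Longrightarrow> (th has_real_derivative (px * y s - py * x s + c0)) (at s)"
    and deriv_x: "\<And>s. 0 < s \<Longrightarrow> s < T \<Longrightarrow> (x has_real_derivative cos (th s)) (at s)"
    and deriv_y: "\<And>s. 0 < s \<Longrightarrow> s < T \<Longrightarrow> (y has_real_derivative sin (th s)) (at s)"
    and th_final: "th T = - pi / 2" and x_final: "x T = 0" and y_final: "y T = 0"
    and headings_parallel: "sin (th a - th b) = 0"
    and chord_parallel: "(y b - y a) * cos (th a) = (x b - x a) * sin (th a)"
    and x_corners_differ: "x a \<noteq> x b"
begin

definition u :: "real \<Rightarrow> real" where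
  "u s = px * y s - py * x s + c0"

definition du :: "real \<Rightarrow> real" where
  "du s = px * sin (th s) - py * cos (th s)"

lemma T_pos: "0 < T"
  using corners by simp

lemma has_real_derivative_th: "0 < s \<Longrightarrow> s < T \<Longrightarrow> (th has_real_derivative u s) (at s)"
  using deriv_th unfolding u_def by simp

lemma has_real_derivative_u: "0 < s \<Longrightarrow> s < T \<Longrightarrow> (u has_real_derivative du s) (at s)"
  unfolding u_def[abs_def] du_def by (auto intro!: derivative_eq_intros deriv_x deriv_y)

lemma has_real_derivative_du:
  "0 < s \<Longrightarrow> s < T \<Longrightarrow> (du has_real_derivative (px * cos (th s) + py * sin (th s)) * u s) (at s)"
  unfolding du_def[abs_def] by (auto intro!: derivative_eq_intros has_real_derivative_th simp: algebra_simps)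

lemma continuous_on_u: "continuous_on {0..T} u"
  unfolding u_def[abs_def] by (intro continuous_intros cont_x cont_y)

lemma continuous_on_du: "continuous_on {0..T} du"
  unfolding du_def[abs_def] by (intro continuous_intros cont_th)

lemma abs_px_cos_py_sin_le: "\<bar>px * cos t + py * sin t\<bar> \<le> \<bar>px\<bar> + \<bar>py\<bar>"
proof -
  have "\<bar>px * cos t\<bar> \<le> \<bar>px\<bar>" "\<bar>py * sin t\<bar> \<le> \<bar>py\<bar>" by (simp_all add: abs_mult mult_left_le)
  then show ?thesis by linarith
qed

lemma u_not_vanishing: "\<not> (\<forall>z. 0 < z \<longrightarrow> z < T \<longrightarrow> u z = 0)"
proof
  assume u0: "\<forall>z. 0 < z \<longrightarrow> z < T \<longrightarrow> u z = 0"
  have th_const: "th z = - pi / 2" if "z \<in> {0..T}" for z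
  proof (cases "z = T")
    case False
    then have "th T = th z"
      using that u0 has_real_derivative_th
      by (intro DERIV_isconst_end[of z T th] continuous_on_subset[OF cont_th]) auto
    then show ?thesis using th_final by simp
  qed (simp add: th_final)
  have "x b = x a"
    using corners th_const deriv_x
    by (intro DERIV_isconst_end[of a b x] continuous_on_subset[OF cont_x]) force+
  then show False using x_corners_differ by simp
qed

text \<open>Gronwall's inequality for E = u^2 + du^2, whose derivative is 2 u du (1 + px cos th + py sin th).\<close>

lemma u_du_not_both_zero:
  assumes c: "0 < c" "c < T" and "u c = 0" "du c = 0"
  shows False
proof -
  define K where "K = 1 + \<bar>px\<bar> + \<bar>py\<bar>"
  define E where "E z = (u z)\<^sup>2 + (du z)\<^sup>2" for z
  define E' where "E' z = 2 * u z * du z * (1 + (px * cos (th z) + py * sin (th z)))" for z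
  have "E z = 0" if "0 < z" "z < T" for z
  proof (rule gronwall_zero[of 0 T E E' K c])
    show "(E has_real_derivative E' w) (at w)" if "0 < w" "w < T" for w
      unfolding E_def[abs_def] E'_def using that
      by (auto intro!: derivative_eq_intros has_real_derivative_u has_real_derivative_du
          simp: algebra_simps)
    show "\<bar>E' w\<bar> \<le> K * E w" for w
    proof -
      have "\<bar>2 * u w * du w\<bar> \<le> E w"
        using sum_squares_bound[of "u w" "du w"] zero_le_power2[of "u w + du w"]
        by (simp add: E_def power2_sum abs_le_iff)
      moreover have "\<bar>1 + (px * cos (th w) + py * sin (th w))\<bar> \<le> K"
        using abs_px_cos_py_sin_le[of "th w"] by (simp add: K_def)
      ultimately show ?thesis
        unfolding E'_def abs_mult[of "2 * u w * du w"] by (simp add: mult_mono mult.commute)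
    qed
    show "0 \<le> E w" for w by (simp add: E_def)
    show "E c = 0" using assms by (simp add: E_def)
  qed (use that c in auto)
  then have "u z = 0" if "0 < z" "z < T" for z
    using that by (simp add: E_def add_nonneg_eq_0_iff)
  then show False using u_not_vanishing by blast
qed

text \<open>On [a, b] the arc is reflected across the line through (x a, y a) with heading th a,
  using the reflection matrix [[cos 2 th a, sin 2 th a], [sin 2 th a, - cos 2 th a]]; after b it is
  translated by the reflected chord minus the chord, which vanishes.  The control of the reflected
  arc is v; it uses u (clip 0 T s) only to be defined and measurable on the whole line.\<close>

definition th_refl :: "real \<Rightarrow> real" where
  "th_refl s = th s - 2 * (th (clip a b s) - th a)"

definition x_refl :: "real \<Rightarrow> real" where
  "x_refl s = x s + (cos (2 * th a) - 1) * (x (clip a b s) - x a) + sin (2 * th a) * (y (clip a b s) - y a)"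

definition y_refl :: "real \<Rightarrow> real" where
  "y_refl s = y s + sin (2 * th a) * (x (clip a b s) - x a) - (cos (2 * th a) + 1) * (y (clip a b s) - y a)"

definition v :: "real \<Rightarrow> real" where
  "v s = (if a < s \<and> s \<le> b then - u (clip 0 T s) else u (clip 0 T s))"

lemma continuous_on_comp_clip_corners:
  "continuous_on {0..T} G \<Longrightarrow> continuous_on {0..T} (\<lambda>s. G (clip a b s))"
proof -
  assume "continuous_on {0..T} G"
  moreover have "clip a b ` {0..T} \<subseteq> {0..T}" using corners by (auto simp: clip_def)
  ultimately show ?thesis using continuous_on_compose2[OF _ continuous_on_clip] by blast
qed

lemma headings_differ_by_multiple_pi: obtains k :: int where "th b = th a + of_int k * pi"
proof -
  obtain i :: int where "th a - th b = of_int i * pi"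
    using headings_parallel sin_zero_iff_int2 by blast
  then have "th b = th a + of_int (- i) * pi" by simp
  then show ?thesis using that by blast
qed

lemma cos_sin_shift: "cos (t - 2 * (th b - th a)) = cos t" "sin (t - 2 * (th b - th a)) = sin t"
proof -
  obtain k :: int where "th b = th a + of_int k * pi" using headings_differ_by_multiple_pi by blast
  then have "t - 2 * (th b - th a) = t + (2 * pi) * of_int (- k)" by (simp add: algebra_simps)
  then show "cos (t - 2 * (th b - th a)) = cos t" "sin (t - 2 * (th b - th a)) = sin t"
    by (simp_all only: cos_add sin_add) simp_all
qed

lemma v_eq: "0 < s \<Longrightarrow> s < T \<Longrightarrow> s \<noteq> b \<Longrightarrow> v s = (if a < s \<and> s < b then - u s else u s)"
  by (auto simp: v_def clip_def)

lemma v_sq: "s \<in> {0..T} \<Longrightarrow> (v s)\<^sup>2 = (u s)\<^sup>2"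
  by (simp add: v_def clip_def)

lemma v_measurable: "v \<in> borel_measurable borel"
proof -
  have "continuous_on UNIV (\<lambda>s. u (clip 0 T s))"
    using T_pos clip_in[of 0 T]
    by (intro continuous_on_compose2[OF continuous_on_u continuous_on_clip]) auto
  then have "(\<lambda>s. u (clip 0 T s)) \<in> borel_measurable borel"
    by (rule borel_measurable_continuous_onI)
  then show ?thesis unfolding v_def[abs_def] by measurable
qed

lemma has_real_derivative_th_refl:
  assumes s: "0 < s" "s < T" "s \<noteq> a" "s \<noteq> b"
  shows "(th_refl has_real_derivative v s) (at s)"
proof -
  have "(th_refl has_real_derivative u s - 2 * ((if a < s \<and> s < b then u s else 0) - 0)) (at s)"
    unfolding th_refl_def[abs_def] using corners s
    by (intro DERIV_diff DERIV_cmult has_real_derivative_th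
        has_real_derivative_clip[OF _ _ _ has_real_derivative_th] DERIV_const) auto
  moreover have "u s - 2 * ((if a < s \<and> s < b then u s else 0) - 0) = v s"
    using v_eq[OF s(1,2,4)] by auto
  ultimately show ?thesis by simp
qed

lemma continuous_on_th_refl: "continuous_on {0..T} th_refl"
  unfolding th_refl_def[abs_def] by (intro continuous_intros cont_th continuous_on_comp_clip_corners)

lemma cos_sin_th_refl:
  assumes s: "0 < s" "s < T" "s \<noteq> a" "s \<noteq> b"
  shows "cos (th_refl s) = (if a < s \<and> s < b
      then cos (2 * th a) * cos (th s) + sin (2 * th a) * sin (th s) else cos (th s))"
    "sin (th_refl s) = (if a < s \<and> s < b
      then sin (2 * th a) * cos (th s) - cos (2 * th a) * sin (th s) else sin (th s))"
proof -
  consider "s < a" | "a < s \<and> s < b" | "b < s" using s by linarith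
  then have "cos (th_refl s) = (if a < s \<and> s < b
      then cos (2 * th a) * cos (th s) + sin (2 * th a) * sin (th s) else cos (th s)) \<and>
    sin (th_refl s) = (if a < s \<and> s < b
      then sin (2 * th a) * cos (th s) - cos (2 * th a) * sin (th s) else sin (th s))"
  proof cases
    case 1 then show ?thesis by (simp add: th_refl_def clip_def)
  next
    case 2
    then have "th_refl s = 2 * th a - th s" by (simp add: th_refl_def clip_def)
    then show ?thesis using 2 by (simp add: cos_diff sin_diff)
  next
    case 3
    then have "th_refl s = th s - 2 * (th b - th a)" using corners by (simp add: th_refl_def clip_def)
    then show ?thesis using 3 by (simp only: cos_sin_shift) simp
  qed
  then show "cos (th_refl s) = (if a < s \<and> s < b
      then cos (2 * th a) * cos (th s) + sin (2 * th a) * sin (th s) else cos (th s))"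
    "sin (th_refl s) = (if a < s \<and> s < b
      then sin (2 * th a) * cos (th s) - cos (2 * th a) * sin (th s) else sin (th s))"
    by auto
qed

lemma has_real_derivative_x_refl:
  assumes s: "0 < s" "s < T" "s \<noteq> a" "s \<noteq> b"
  shows "(x_refl has_real_derivative cos (th_refl s)) (at s)"
proof -
  have "(x_refl has_real_derivative
      cos (th s) + (cos (2 * th a) - 1) * ((if a < s \<and> s < b then cos (th s) else 0) - 0)
       + sin (2 * th a) * ((if a < s \<and> s < b then sin (th s) else 0) - 0)) (at s)"
    unfolding x_refl_def[abs_def] using corners s
    by (intro DERIV_add DERIV_diff DERIV_cmult deriv_x DERIV_const
        has_real_derivative_clip[OF _ _ _ deriv_x] has_real_derivative_clip[OF _ _ _ deriv_y]) auto
  then show ?thesis unfolding cos_sin_th_refl[OF s] by (auto simp: algebra_simps)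
qed

lemma has_real_derivative_y_refl:
  assumes s: "0 < s" "s < T" "s \<noteq> a" "s \<noteq> b"
  shows "(y_refl has_real_derivative sin (th_refl s)) (at s)"
proof -
  have "(y_refl has_real_derivative
      sin (th s) + sin (2 * th a) * ((if a < s \<and> s < b then cos (th s) else 0) - 0)
       - (cos (2 * th a) + 1) * ((if a < s \<and> s < b then sin (th s) else 0) - 0)) (at s)"
    unfolding y_refl_def[abs_def] using corners s
    by (intro DERIV_add DERIV_diff DERIV_cmult deriv_y DERIV_const
        has_real_derivative_clip[OF _ _ _ deriv_x] has_real_derivative_clip[OF _ _ _ deriv_y]) auto
  then show ?thesis unfolding cos_sin_th_refl[OF s] by (auto simp: algebra_simps)
qed

lemma reflection_fixes_chord:
  "(cos (2 * th a) - 1) * (x b - x a) + sin (2 * th a) * (y b - y a) = 0"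
  "sin (2 * th a) * (x b - x a) - (cos (2 * th a) + 1) * (y b - y a) = 0"
proof -
  have c2: "cos (2 * th a) = 1 - 2 * (sin (th a))\<^sup>2" "cos (2 * th a) = 2 * (cos (th a))\<^sup>2 - 1"
    "sin (2 * th a) = 2 * sin (th a) * cos (th a)"
    by (simp only: cos_double_sin, simp only: cos_double_cos, simp only: sin_double)
  have "(cos (2 * th a) - 1) * (x b - x a) + sin (2 * th a) * (y b - y a)
      = 2 * sin (th a) * ((y b - y a) * cos (th a) - (x b - x a) * sin (th a))"
    unfolding c2(1) c2(3) by (simp add: algebra_simps power2_eq_square)
  moreover have "sin (2 * th a) * (x b - x a) - (cos (2 * th a) + 1) * (y b - y a)
      = 2 * cos (th a) * ((x b - x a) * sin (th a) - (y b - y a) * cos (th a))"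
    unfolding c2(2) c2(3) by (simp add: algebra_simps power2_eq_square)
  ultimately show "(cos (2 * th a) - 1) * (x b - x a) + sin (2 * th a) * (y b - y a) = 0"
    "sin (2 * th a) * (x b - x a) - (cos (2 * th a) + 1) * (y b - y a) = 0"
    using chord_parallel by simp_all
qed

lemma refl_initial: "x_refl 0 = x 0" "y_refl 0 = y 0" "th_refl 0 = th 0"
  using corners by (simp_all add: x_refl_def y_refl_def th_refl_def clip_def)

lemma refl_final: "x_refl T = x T" "y_refl T = y T" "\<exists>k::int. th_refl T = - pi / 2 + 2 * pi * of_int k"
proof -
  have clip_T: "clip a b T = b" using corners by (simp add: clip_def)
  show "x_refl T = x T" "y_refl T = y T"
    using reflection_fixes_chord by (simp_all add: x_refl_def y_refl_def clip_T)
  obtain k :: int where "th b = th a + of_int k * pi" using headings_differ_by_multiple_pi by blast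
  then have "th_refl T = - pi / 2 + 2 * pi * of_int (- k)"
    using th_final by (simp add: th_refl_def clip_T algebra_simps)
  then show "\<exists>k::int. th_refl T = - pi / 2 + 2 * pi * of_int k" by blast
qed

lemma v_has_integral: "s \<in> {0..T} \<Longrightarrow> (v has_integral (th_refl s - th_refl 0)) {0..s}"
  by (rule fundamental_theorem_of_calculus_interior_strong[of "{a, b}"])
     (auto intro!: has_real_derivative_th_refl[unfolded has_real_derivative_iff_has_vector_derivative]
       intro: continuous_on_subset[OF continuous_on_th_refl])

lemma cos_th_refl_has_integral: "((\<lambda>s. cos (th_refl s)) has_integral (x T - x 0)) {0..T}"
proof -
  have "continuous_on {0..T} x_refl"
    unfolding x_refl_def[abs_def] by (intro continuous_intros cont_x cont_y continuous_on_comp_clip_corners)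
  then show ?thesis
    using fundamental_theorem_of_calculus_interior_strong[of "{a, b}" 0 T x_refl "\<lambda>s. cos (th_refl s)"]
      has_real_derivative_x_refl[unfolded has_real_derivative_iff_has_vector_derivative]
      T_pos refl_initial refl_final
    by auto
qed

lemma sin_th_refl_has_integral: "((\<lambda>s. sin (th_refl s)) has_integral (y T - y 0)) {0..T}"
proof -
  have "continuous_on {0..T} y_refl"
    unfolding y_refl_def[abs_def] by (intro continuous_intros cont_x cont_y continuous_on_comp_clip_corners)
  then show ?thesis
    using fundamental_theorem_of_calculus_interior_strong[of "{a, b}" 0 T y_refl "\<lambda>s. sin (th_refl s)"]
      has_real_derivative_y_refl[unfolded has_real_derivative_iff_has_vector_derivative]
      T_pos refl_initial refl_final
    by auto
qed

end

section \<open>No Lagrange multiplier for the reflected control\<close>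

context colinear_extremal
begin

definition u_bound :: real where
  "u_bound = (SOME B. 0 < B \<and> (\<forall>s\<in>{0..T}. \<bar>u s\<bar> \<le> B))"

lemma u_bound_pos: "0 < u_bound" and abs_u_le: "s \<in> {0..T} \<Longrightarrow> \<bar>u s\<bar> \<le> u_bound"
proof -
  have "bounded (u ` {0..T})"
    by (rule compact_imp_bounded[OF compact_continuous_image[OF continuous_on_u compact_Icc]])
  then have "\<exists>B. 0 < B \<and> (\<forall>s\<in>{0..T}. \<bar>u s\<bar> \<le> B)"
    by (auto simp: bounded_pos)
  then have "0 < u_bound \<and> (\<forall>s\<in>{0..T}. \<bar>u s\<bar> \<le> u_bound)"
    unfolding u_bound_def by (rule someI_ex)
  then show "0 < u_bound" "s \<in> {0..T} \<Longrightarrow> \<bar>u s\<bar> \<le> u_bound" by auto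
qed

lemma abs_v_le: "s \<in> {0..T} \<Longrightarrow> \<bar>v s\<bar> \<le> u_bound"
  using abs_u_le[of s] by (simp add: v_def clip_def)

definition du_lip :: real where
  "du_lip = (\<bar>px\<bar> + \<bar>py\<bar>) * u_bound"

lemma du_lip_nonneg: "0 \<le> du_lip"
  using u_bound_pos by (simp add: du_lip_def)

lemma abs_th_diff_le: "s \<in> {0..T} \<Longrightarrow> z \<in> {0..T} \<Longrightarrow> \<bar>th s - th z\<bar> \<le> u_bound * \<bar>s - z\<bar>"
  by (rule abs_diff_le_by_deriv_bound[OF cont_th, where f'=u])
     (auto intro: has_real_derivative_th abs_u_le)

lemma abs_du_diff_le: "s \<in> {0..T} \<Longrightarrow> z \<in> {0..T} \<Longrightarrow> \<bar>du s - du z\<bar> \<le> du_lip * \<bar>s - z\<bar>"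
proof (rule abs_diff_le_by_deriv_bound[OF continuous_on_du,
      where f'="\<lambda>s. (px * cos (th s) + py * sin (th s)) * u s"])
  show "\<bar>(px * cos (th w) + py * sin (th w)) * u w\<bar> \<le> du_lip" if "0 < w" "w < T" for w
    unfolding abs_mult du_lip_def using that abs_px_cos_py_sin_le abs_u_le
    by (intro mult_mono) auto
qed (auto intro: has_real_derivative_du)

lemma th_second_order_bound:
  assumes c: "0 < c" "c < T" and z: "z \<in> {0..T}"
  shows "\<bar>th z - th c - u c * (z - c) - du c * (z - c)\<^sup>2 / 2\<bar> \<le> du_lip * \<bar>z - c\<bar> ^ 3"
proof -
  define g where "g w = th w - u c * w - du c * (w - c)\<^sup>2 / 2" for w
  have cg: "continuous_on {min c z..max c z} g"
    unfolding g_def[abs_def] using c z by (intro continuous_intros continuous_on_subset[OF cont_th]) auto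
  have "\<bar>g z - g c\<bar> \<le> (du_lip * (z - c)\<^sup>2) * \<bar>z - c\<bar>"
  proof (rule abs_diff_le_by_deriv_bound[OF cg, where f'="\<lambda>w. u w - u c - du c * (w - c)"])
    show "c \<in> {min c z..max c z}" "z \<in> {min c z..max c z}" by auto
    fix w assume w: "min c z < w" "w < max c z"
    then have w': "0 < w" "w < T" using c z by auto
    show "(g has_real_derivative u w - u c - du c * (w - c)) (at w)"
      unfolding g_def[abs_def] by (auto intro!: derivative_eq_intros has_real_derivative_th[OF w'] simp: field_simps)
    have "\<bar>u w - u c - du c * (w - c)\<bar> \<le> du_lip * (w - c)\<^sup>2"
      by (rule first_order_remainder_bound[OF continuous_on_u, where f'=du])
         (use has_real_derivative_u abs_du_diff_le du_lip_nonneg w' c in auto)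
    also have "\<dots> \<le> du_lip * (z - c)\<^sup>2"
    proof -
      have "\<bar>w - c\<bar> \<le> \<bar>z - c\<bar>" using w by (auto simp: min_def max_def split: if_splits)
      then have "(w - c)\<^sup>2 \<le> (z - c)\<^sup>2" by (simp add: abs_le_square_iff)
      then show ?thesis using du_lip_nonneg by (rule mult_left_mono)
    qed
    finally show "\<bar>u w - u c - du c * (w - c)\<bar> \<le> du_lip * (z - c)\<^sup>2" .
  qed
  moreover have "g z - g c = th z - th c - u c * (z - c) - du c * (z - c)\<^sup>2 / 2"
    by (simp add: g_def algebra_simps)
  moreover have "(du_lip * (z - c)\<^sup>2) * \<bar>z - c\<bar> = du_lip * \<bar>z - c\<bar> ^ 3"
    by (simp add: power2_eq_square power3_eq_cube abs_mult_self_eq mult.assoc)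
  ultimately show ?thesis by simp
qed

lemma abs_th_refl_diff_le:
  assumes s: "s \<in> {0..T}" and z: "z \<in> {0..T}"
  shows "\<bar>th_refl s - th_refl z\<bar> \<le> 3 * u_bound * \<bar>s - z\<bar>"
proof -
  have "clip a b s \<in> {0..T}" "clip a b z \<in> {0..T}" using corners by (auto simp: clip_def)
  then have "\<bar>th (clip a b s) - th (clip a b z)\<bar> \<le> u_bound * \<bar>clip a b s - clip a b z\<bar>"
    by (rule abs_th_diff_le)
  also have "\<dots> \<le> u_bound * \<bar>s - z\<bar>"
    using abs_clip_diff_le u_bound_pos by (intro mult_left_mono) auto
  finally show ?thesis using abs_th_diff_le[OF s z] unfolding th_refl_def by simp
qed

text \<open>A multiplier (m1, m2, m3, m4) weighs an angle variation W by angle_weight m1 m2.\<close>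

definition angle_weight :: "real \<Rightarrow> real \<Rightarrow> real \<Rightarrow> real" where
  "angle_weight m1 m2 s = m2 * cos (th_refl s) - m1 * sin (th_refl s)"

definition angle_weight_lip :: "real \<Rightarrow> real \<Rightarrow> real" where
  "angle_weight_lip m1 m2 = (\<bar>m1\<bar> + \<bar>m2\<bar>) * (3 * u_bound)"

lemma angle_weight_lip_nonneg: "0 \<le> angle_weight_lip m1 m2"
  using u_bound_pos by (simp add: angle_weight_lip_def)

lemma abs_angle_weight_diff_le:
  assumes s: "s \<in> {0..T}" and z: "z \<in> {0..T}"
  shows "\<bar>angle_weight m1 m2 s - angle_weight m1 m2 z\<bar> \<le> angle_weight_lip m1 m2 * \<bar>s - z\<bar>"
proof -
  have "\<bar>angle_weight m1 m2 s - angle_weight m1 m2 z\<bar>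
      = \<bar>m2 * (cos (th_refl s) - cos (th_refl z)) - m1 * (sin (th_refl s) - sin (th_refl z))\<bar>"
    by (simp add: angle_weight_def algebra_simps)
  also have "\<dots> \<le> \<bar>m2\<bar> * \<bar>cos (th_refl s) - cos (th_refl z)\<bar> + \<bar>m1\<bar> * \<bar>sin (th_refl s) - sin (th_refl z)\<bar>"
    by (simp add: abs_mult[symmetric] abs_triangle_ineq4)
  also have "\<dots> \<le> \<bar>m2\<bar> * \<bar>th_refl s - th_refl z\<bar> + \<bar>m1\<bar> * \<bar>th_refl s - th_refl z\<bar>"
    by (intro add_mono mult_left_mono abs_cos_diff_le abs_sin_diff_le) auto
  also have "\<dots> = (\<bar>m1\<bar> + \<bar>m2\<bar>) * \<bar>th_refl s - th_refl z\<bar>"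
    by (simp add: algebra_simps)
  also have "\<dots> \<le> (\<bar>m1\<bar> + \<bar>m2\<bar>) * (3 * u_bound * \<bar>s - z\<bar>)"
    by (intro mult_left_mono abs_th_refl_diff_le[OF s z]) auto
  finally show ?thesis by (simp add: angle_weight_lip_def mult.assoc)
qed

lemma continuous_on_angle_weight: "continuous_on {0..T} (angle_weight m1 m2)"
  unfolding angle_weight_def[abs_def] by (intro continuous_intros continuous_on_th_refl)

end

lemma difference_quotients_estimate:
  fixes th0 th1 th2 U D Ld e g :: real
  assumes left: "\<bar>th1 - th0 + U * e - D * e\<^sup>2 / 2\<bar> \<le> Ld * e ^ 3"
    and right: "\<bar>th2 - th0 - U * g - D * g\<^sup>2 / 2\<bar> \<le> Ld * g ^ 3"
    and e: "0 < e" and g: "0 < g" "g \<le> 2 * e" and Ld: "0 \<le> Ld"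
  shows "\<bar>(th0 - th1) / e + (th2 - th0) / g - (2 * U + D * (g - e) / 2)\<bar> \<le> 5 * Ld * e\<^sup>2"
proof -
  have quotient: "\<bar>r / h\<bar> \<le> Ld * h\<^sup>2" if "\<bar>r\<bar> \<le> Ld * h ^ 3" "0 < h" for r h
    using that by (simp add: abs_divide divide_le_eq power2_eq_square power3_eq_cube algebra_simps)
  have "(th0 - th1) / e + (th2 - th0) / g - (2 * U + D * (g - e) / 2)
      = (th2 - th0 - U * g - D * g\<^sup>2 / 2) / g - (th1 - th0 + U * e - D * e\<^sup>2 / 2) / e"
    using e g by (simp add: field_simps power2_eq_square)
  moreover have "Ld * g\<^sup>2 \<le> 4 * Ld * e\<^sup>2"
    using mult_left_mono[OF power_mono[OF g(2), of 2] Ld] g(1) by (simp add: power_mult_distrib)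
  ultimately show ?thesis
    using quotient[OF left e] quotient[OF right g(1)]
      abs_triangle_ineq4[of "(th2 - th0 - U * g - D * g\<^sup>2 / 2) / g" "(th1 - th0 + U * e - D * e\<^sup>2 / 2) / e"]
    by linarith
qed

text \<open>IG and S stand for the integrals of the angle weight against a tent at the corner and of the
  reflected control against its slope, Ga for the angle weight at the corner.\<close>

lemma corner_estimate:
  fixes m4 S IG Ga LG Ld U D e g :: real
  assumes balance: "IG + m4 * S = 0"
    and tent: "\<bar>IG - Ga * ((e + g) / 2)\<bar> \<le> LG * (e + g) * ((e + g) / 2)"
    and quotients: "\<bar>S - (2 * U + D * (g - e) / 2)\<bar> \<le> 5 * Ld * e\<^sup>2"
    and e: "0 < e" and g: "0 < g" "g \<le> 2 * e" and LG: "0 \<le> LG"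
  shows "\<bar>m4 * (2 * U + D * (g - e) / 2) + Ga * ((e + g) / 2)\<bar> \<le> (5 * \<bar>m4\<bar> * Ld + 9 / 2 * LG) * e\<^sup>2"
proof -
  have cost_part: "\<bar>m4 * (S - (2 * U + D * (g - e) / 2))\<bar> \<le> \<bar>m4\<bar> * (5 * Ld * e\<^sup>2)"
    unfolding abs_mult by (rule mult_left_mono[OF quotients]) simp
  have "(e + g) * (e + g) \<le> (3 * e) * (3 * e)" using e g by (intro mult_mono) auto
  then have "LG * ((e + g) * (e + g)) \<le> LG * ((3 * e) * (3 * e))" using LG by (rule mult_left_mono)
  then have angle_part: "\<bar>IG - Ga * ((e + g) / 2)\<bar> \<le> 9 / 2 * LG * e\<^sup>2"
    using tent by (simp add: power2_eq_square algebra_simps)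
  have "m4 * (2 * U + D * (g - e) / 2) + Ga * ((e + g) / 2)
      = - (m4 * (S - (2 * U + D * (g - e) / 2))) - (IG - Ga * ((e + g) / 2))"
    using balance by (simp add: algebra_simps)
  then have "\<bar>m4 * (2 * U + D * (g - e) / 2) + Ga * ((e + g) / 2)\<bar>
      \<le> \<bar>m4 * (S - (2 * U + D * (g - e) / 2))\<bar> + \<bar>IG - Ga * ((e + g) / 2)\<bar>"
    using abs_triangle_ineq4[of "- (m4 * (S - (2 * U + D * (g - e) / 2)))" "IG - Ga * ((e + g) / 2)"]
    by (simp only: abs_minus_cancel)
  then show ?thesis using cost_part angle_part by (simp add: algebra_simps)
qed

context colinear_extremal
begin

text \<open>Variations are pairs (W, w) of a perturbation w of the control and its primitive W, the
  resulting perturbation of the angle.\<close>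

definition variations :: "((real \<Rightarrow> real) \<times> (real \<Rightarrow> real)) set" where
  "variations = {(tent c dl dr, tent_slope c dl dr) | c dl dr. 0 < dl \<and> 0 < dr \<and> 0 < c - dl \<and> c + dr < T}
     \<union> {(\<lambda>s. s, \<lambda>s. 1)}"

definition variation_vec :: "(real \<Rightarrow> real) \<times> (real \<Rightarrow> real) \<Rightarrow> R4" where
  "variation_vec p =
    (integral {0..T} (\<lambda>s. - sin (th_refl s) * fst p s), integral {0..T} (\<lambda>s. cos (th_refl s) * fst p s),
     fst p T, integral {0..T} (\<lambda>s. v s * snd p s))"

definition admissible_variation :: "(real \<Rightarrow> real) \<times> (real \<Rightarrow> real) \<Rightarrow> bool" where
  "admissible_variation p \<longleftrightarrow> continuous_on {0..T} (fst p) \<and> snd p \<in> borel_measurable borel \<and>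
     (\<exists>K. \<forall>s\<in>{0..T}. \<bar>fst p s\<bar> \<le> K \<and> \<bar>snd p s\<bar> \<le> K) \<and>
     (\<forall>s\<in>{0..T}. (snd p has_integral fst p s) {0..s})"

lemma tent_in_variations:
  "0 < dl \<Longrightarrow> 0 < dr \<Longrightarrow> 0 < c - dl \<Longrightarrow> c + dr < T \<Longrightarrow> (tent c dl dr, tent_slope c dl dr) \<in> variations"
  unfolding variations_def by blast

lemma identity_in_variations: "(\<lambda>s. s, \<lambda>s. 1) \<in> variations"
  unfolding variations_def by blast

lemma admissible_variation_tent:
  assumes dl: "0 < dl" and dr: "0 < dr" and "0 < c - dl"
  shows "admissible_variation (tent c dl dr, tent_slope c dl dr)"
  unfolding admissible_variation_def fst_conv snd_conv
proof (intro conjI)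
  show "continuous_on {0..T} (tent c dl dr)" by (rule continuous_on_tent[OF dl dr])
  show "tent_slope c dl dr \<in> borel_measurable borel" by (rule tent_slope_measurable[OF dl dr])
  have pos: "0 < 1 / dl + 1 / dr" using dl dr by (intro add_pos_pos) auto
  have "\<bar>tent c dl dr s\<bar> \<le> 1 + (1 / dl + 1 / dr) \<and> \<bar>tent_slope c dl dr s\<bar> \<le> 1 + (1 / dl + 1 / dr)" for s
  proof -
    have "\<bar>tent c dl dr s\<bar> \<le> 1" using tent_nonneg[OF dl dr, of c s] tent_le_one[OF dl dr, of c s] by simp
    then show ?thesis using abs_tent_slope_le[OF dl dr, of c s] pos by linarith
  qed
  then show "\<exists>K. \<forall>s\<in>{0..T}. \<bar>tent c dl dr s\<bar> \<le> K \<and> \<bar>tent_slope c dl dr s\<bar> \<le> K" by blast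
  have "tent c dl dr 0 = 0" using tent_eq(1)[OF dl dr, of 0 c] assms(3) by simp
  then show "\<forall>s\<in>{0..T}. (tent_slope c dl dr has_integral tent c dl dr s) {0..s}"
    using tent_slope_has_integral[OF dl dr, of _ c] by auto
qed

lemma admissible_variation_identity: "admissible_variation (\<lambda>s. s, \<lambda>s. 1)"
  unfolding admissible_variation_def fst_conv snd_conv
proof (intro conjI)
  show "\<exists>K. \<forall>s\<in>{0..T}. \<bar>s\<bar> \<le> K \<and> \<bar>1::real\<bar> \<le> K"
    using T_pos by (intro exI[of _ "T + 1"]) auto
  show "\<forall>s\<in>{0..T}. ((\<lambda>s. 1::real) has_integral s) {0..s}"
  proof
    fix s :: real assume "s \<in> {0..T}"
    then show "((\<lambda>s. 1::real) has_integral s) {0..s}"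
      using has_integral_const_real[of "1::real" 0 s] by simp
  qed
qed (auto intro: continuous_on_id)

lemma variations_admissible: "p \<in> variations \<Longrightarrow> admissible_variation p"
  unfolding variations_def by (auto intro: admissible_variation_tent admissible_variation_identity)

lemma inner_variation_vec:
  assumes "continuous_on {0..T} W"
  shows "(m1, m2, m3, m4) \<bullet> variation_vec (W, w)
    = integral {0..T} (\<lambda>s. angle_weight m1 m2 s * W s) + m3 * W T + m4 * integral {0..T} (\<lambda>s. v s * w s)"
proof -
  have i1: "(\<lambda>s. m1 * (- sin (th_refl s) * W s)) integrable_on {0..T}"
    and i2: "(\<lambda>s. m2 * (cos (th_refl s) * W s)) integrable_on {0..T}"
    by (intro integrable_continuous_interval continuous_intros continuous_on_th_refl assms)+
  have "integral {0..T} (\<lambda>s. angle_weight m1 m2 s * W s)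
      = integral {0..T} (\<lambda>s. m1 * (- sin (th_refl s) * W s) + m2 * (cos (th_refl s) * W s))"
    by (rule integral_cong) (simp add: angle_weight_def algebra_simps)
  also have "\<dots> = m1 * integral {0..T} (\<lambda>s. - sin (th_refl s) * W s)
      + m2 * integral {0..T} (\<lambda>s. cos (th_refl s) * W s)"
    by (simp only: integral_add[OF i1 i2] integral_mult_right)
  finally show ?thesis
    by (simp only: variation_vec_def fst_conv snd_conv inner_Pair inner_real_def add.assoc)
qed

lemma multiplier_tent_eq:
  assumes \<mu>: "\<forall>p\<in>variations. (m1, m2, m3, m4) \<bullet> variation_vec p = 0"
    and dl: "0 < dl" and dr: "0 < dr" and "0 < c - dl" "c + dr < T"
  shows "integral {0..T} (\<lambda>s. angle_weight m1 m2 s * tent c dl dr s)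
    + m4 * integral {0..T} (\<lambda>s. v s * tent_slope c dl dr s) = 0"
proof -
  have "(m1, m2, m3, m4) \<bullet> variation_vec (tent c dl dr, tent_slope c dl dr) = 0"
    using \<mu> tent_in_variations[OF dl dr assms(4,5)] by blast
  moreover have "tent c dl dr T = 0" using tent_eq(4)[OF dl dr] assms(5) by simp
  ultimately show ?thesis using inner_variation_vec[OF continuous_on_tent[OF dl dr]] by simp
qed

lemma abs_integral_angle_weight_tent_le:
  assumes dl: "0 < dl" and dr: "0 < dr" and c: "0 < c - dl" "c + dr < T"
  shows "\<bar>integral {0..T} (\<lambda>s. angle_weight m1 m2 s * tent c dl dr s) - angle_weight m1 m2 c * ((dl + dr) / 2)\<bar>
     \<le> angle_weight_lip m1 m2 * (dl + dr) * ((dl + dr) / 2)"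
proof -
  define K where "K = angle_weight_lip m1 m2 * (dl + dr)"
  have int_tent: "integral {0..T} (tent c dl dr) = (dl + dr) / 2"
    using tent_has_integral[OF dl dr c] by (rule integral_unique)
  have i1: "(\<lambda>s. angle_weight m1 m2 s * tent c dl dr s) integrable_on {0..T}"
    by (intro integrable_continuous_interval continuous_intros continuous_on_angle_weight
        continuous_on_tent[OF dl dr])
  have i2: "(\<lambda>s. k * tent c dl dr s) integrable_on {0..T}" for k
    by (intro integrable_continuous_interval continuous_intros continuous_on_tent[OF dl dr])
  have "norm (angle_weight m1 m2 s * tent c dl dr s - angle_weight m1 m2 c * tent c dl dr s)
      \<le> K * tent c dl dr s" if s: "s \<in> {0..T}" for s
  proof (cases "tent c dl dr s = 0")
    case False
    then have "c - dl < s" "s < c + dr" using tent_support[OF dl dr] by auto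
    then have "\<bar>s - c\<bar> \<le> dl + dr" using dl dr by auto
    moreover have "c \<in> {0..T}" using c dl dr by auto
    ultimately have "\<bar>angle_weight m1 m2 s - angle_weight m1 m2 c\<bar> \<le> K"
      using abs_angle_weight_diff_le[OF s, of c m1 m2] mult_left_mono[OF _ angle_weight_lip_nonneg[of m1 m2]]
      unfolding K_def by (meson order_trans)
    then show ?thesis
      using tent_nonneg[OF dl dr, of c s]
      by (simp add: left_diff_distrib[symmetric] abs_mult mult_right_mono)
  qed simp
  then have "norm (integral {0..T} (\<lambda>s. angle_weight m1 m2 s * tent c dl dr s - angle_weight m1 m2 c * tent c dl dr s))
      \<le> integral {0..T} (\<lambda>s. K * tent c dl dr s)"
    by (intro integral_norm_bound_integral integrable_diff i1 i2)
  then show ?thesis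
    using i1 i2 int_tent by (simp add: integral_diff K_def)
qed

text \<open>Left of the corner a the control v is th', right of it - th', so against the tent slope
  it yields a sum of two difference quotients of th rather than their difference.\<close>

lemma integral_v_corner_tent_slope:
  assumes dl: "0 < dl" and dr: "0 < dr" and "0 < a - dl" "a + dr < b"
  shows "integral {0..T} (\<lambda>s. v s * tent_slope a dl dr s) = (th a - th (a - dl)) / dl + (th (a + dr) - th a) / dr"
proof -
  define \<Phi> where "\<Phi> s = (th (clip (a - dl) a s) - th (a - dl)) / dl + (th (clip a (a + dr) s) - th a) / dr" for s
  have "clip (a - dl) a ` {0..T} \<subseteq> {0..T}" "clip a (a + dr) ` {0..T} \<subseteq> {0..T}"
    using assms corners by (auto simp: clip_def)
  then have "continuous_on {0..T} \<Phi>"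
    unfolding \<Phi>_def[abs_def]
    by (intro continuous_intros continuous_on_compose2[OF cont_th continuous_on_clip]) (use dl dr in auto)
  moreover have "(\<Phi> has_real_derivative v s * tent_slope a dl dr s) (at s)"
    if s: "0 < s" "s < T" "s \<noteq> a - dl" "s \<noteq> a" "s \<noteq> a + dr" "s \<noteq> b" for s
  proof -
    have "(\<Phi> has_real_derivative ((if a - dl < s \<and> s < a then u s else 0) - 0) / dl
        + ((if a < s \<and> s < a + dr then u s else 0) - 0) / dr) (at s)"
      unfolding \<Phi>_def[abs_def] using s dl dr
      by (intro DERIV_add DERIV_cdivide DERIV_diff DERIV_const
          has_real_derivative_clip[OF _ _ _ has_real_derivative_th]) auto
    moreover have "((if a - dl < s \<and> s < a then u s else 0) - 0) / dl
        + ((if a < s \<and> s < a + dr then u s else 0) - 0) / dr = v s * tent_slope a dl dr s"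
      using v_eq[OF s(1,2,6)] assms by (auto simp: tent_slope_def)
    ultimately show ?thesis by simp
  qed
  ultimately have "((\<lambda>s. v s * tent_slope a dl dr s) has_integral (\<Phi> T - \<Phi> 0)) {0..T}"
    using T_pos
    by (intro fundamental_theorem_of_calculus_interior_strong[of "{a - dl, a, a + dr, b}"])
       (auto simp: has_real_derivative_iff_has_vector_derivative[symmetric])
  moreover have "\<Phi> T - \<Phi> 0 = (th a - th (a - dl)) / dl + (th (a + dr) - th a) / dr"
    using assms corners by (simp add: \<Phi>_def clip_def)
  ultimately show ?thesis by (simp add: integral_unique)
qed

lemma angle_weight_zero_if_cost_free:
  assumes \<mu>: "\<forall>p\<in>variations. (m1, m2, m3, 0) \<bullet> variation_vec p = 0" and c: "0 < c" "c < T"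
  shows "angle_weight m1 m2 c = 0"
proof (rule zero_if_abs_le_mult_epsilon[where \<delta>="min c (T - c)" and C="2 * angle_weight_lip m1 m2"])
  show "0 < min c (T - c)" using c by simp
  fix e assume e: "0 < e" "e < min c (T - c)"
  then have ce: "0 < c - e" "c + e < T" by auto
  have I0: "integral {0..T} (\<lambda>s. angle_weight m1 m2 s * tent c e e s) = 0"
    using multiplier_tent_eq[OF \<mu> e(1) e(1) ce] by simp
  have hG: "\<bar>integral {0..T} (\<lambda>s. angle_weight m1 m2 s * tent c e e s) - angle_weight m1 m2 c * ((e + e) / 2)\<bar>
      \<le> angle_weight_lip m1 m2 * (e + e) * ((e + e) / 2)"
    by (rule abs_integral_angle_weight_tent_le[OF e(1) e(1) ce])
  have "\<bar>angle_weight m1 m2 c\<bar> * e \<le> (2 * angle_weight_lip m1 m2 * e) * e"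
    using hG e(1) unfolding I0 by (simp add: abs_mult algebra_simps)
  then show "\<bar>angle_weight m1 m2 c\<bar> \<le> 2 * angle_weight_lip m1 m2 * e" using e(1) by simp
qed

text \<open>Before the corner th_refl = th, and a weight m2 cos th - m1 sin th that vanishes on an
  interval has vanishing derivative - (m2 sin th + m1 cos th) u there, while the two factors
  m2 cos th - m1 sin th and m2 sin th + m1 cos th cannot vanish together.\<close>

lemma multiplier_angle_part_zero:
  assumes vanish: "\<And>c. 0 < c \<Longrightarrow> c < a \<Longrightarrow> angle_weight m1 m2 c = 0"
  shows "m1 = 0 \<and> m2 = 0"
proof (rule ccontr)
  assume m12: "\<not> (m1 = 0 \<and> m2 = 0)"
  define H where "H w = m2 * cos (th w) - m1 * sin (th w)" for w
  have H0: "H w = 0" if "w \<in> {0<..<a}" for w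
    using vanish[of w] that by (simp add: angle_weight_def H_def th_refl_def clip_def)
  have u0: "u z = 0" if z: "0 < z" "z < a" for z
  proof -
    have zT: "0 < z" "z < T" using z corners by auto
    have "(H has_real_derivative - (m2 * sin (th z) + m1 * cos (th z)) * u z) (at z)"
      unfolding H_def[abs_def]
      by (auto intro!: derivative_eq_intros has_real_derivative_th[OF zT] simp: algebra_simps)
    moreover have "(H has_real_derivative 0) (at z)"
      by (rule has_field_derivative_transform_within_open[OF DERIV_const, of "{0<..<a}"])
         (use z H0 in auto)
    ultimately have "(m2 * sin (th z) + m1 * cos (th z)) * u z = 0"
      using DERIV_unique by fastforce
    moreover have "(m2 * sin (th z) + m1 * cos (th z))\<^sup>2 + (H z)\<^sup>2 = m1\<^sup>2 + m2\<^sup>2"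
    proof -
      have "(m2 * sin (th z) + m1 * cos (th z))\<^sup>2 + (H z)\<^sup>2
          = (m1\<^sup>2 + m2\<^sup>2) * ((sin (th z))\<^sup>2 + (cos (th z))\<^sup>2)"
        unfolding H_def by algebra
      then show ?thesis by simp
    qed
    moreover have "0 < m1\<^sup>2 + m2\<^sup>2" using m12 by (auto simp: add_pos_nonneg add_nonneg_pos)
    ultimately show ?thesis using H0[of z] z by auto
  qed
  define c where "c = a / 2"
  have c: "0 < c" "c < a" "c < T" using corners by (auto simp: c_def)
  have "(u has_real_derivative 0) (at c)"
    by (rule has_field_derivative_transform_within_open[OF DERIV_const, of "{0<..<a}"]) (use c u0 in auto)
  then have "du c = 0" using DERIV_unique[OF has_real_derivative_u[OF c(1,3)]] by simp
  then show False using u_du_not_both_zero[OF c(1,3) u0[OF c(1,2)]] by simp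
qed

lemma multiplier_zero_if_cost_free:
  assumes \<mu>: "\<forall>p\<in>variations. (m1, m2, m3, 0) \<bullet> variation_vec p = 0"
  shows "m1 = 0 \<and> m2 = 0 \<and> m3 = 0"
proof -
  have "angle_weight m1 m2 c = 0" if "0 < c" "c < a" for c
    using angle_weight_zero_if_cost_free[OF \<mu> that(1)] that(2) corners by simp
  then have m12: "m1 = 0 \<and> m2 = 0" by (rule multiplier_angle_part_zero)
  have "(m1, m2, m3, 0) \<bullet> variation_vec (\<lambda>s. s, \<lambda>s. 1) = 0"
    using \<mu> identity_in_variations by blast
  then have "m3 * T = 0"
    using inner_variation_vec[of "\<lambda>s. s" m1 m2 m3 0 "\<lambda>s. 1"] m12
    by (simp add: continuous_on_id angle_weight_def)
  then show ?thesis using m12 T_pos by simp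
qed

text \<open>Tents at the corner a with right width e and 2 e separate the terms 2 u a, du a and the
  angle weight at a in the multiplier identity.\<close>

lemma corner_multiplier_expansion:
  assumes \<mu>: "\<forall>p\<in>variations. (m1, m2, m3, m4) \<bullet> variation_vec p = 0"
    and e: "0 < e" "e < min a ((b - a) / 2)" and g: "g = e \<or> g = 2 * e"
  shows "\<bar>m4 * (2 * u a + du a * (g - e) / 2) + angle_weight m1 m2 a * ((e + g) / 2)\<bar>
    \<le> (5 * \<bar>m4\<bar> * du_lip + 9 / 2 * angle_weight_lip m1 m2) * e\<^sup>2"
proof -
  have aT: "0 < a" "a < T" using corners by auto
  have g0: "0 < g" "g \<le> 2 * e" using e g by auto
  have v1: "0 < a - e" "a + g < b" "a + g < T" using e g corners by auto
  have "a - e \<in> {0..T}" "a + g \<in> {0..T}" using v1 corners e g0 by auto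
  then have "\<bar>th (a - e) - th a + u a * e - du a * e\<^sup>2 / 2\<bar> \<le> du_lip * e ^ 3"
    "\<bar>th (a + g) - th a - u a * g - du a * g\<^sup>2 / 2\<bar> \<le> du_lip * g ^ 3"
    using th_second_order_bound[OF aT, of "a - e"] th_second_order_bound[OF aT, of "a + g"] e(1) g0(1)
    by simp_all
  from difference_quotients_estimate[OF this e(1) g0 du_lip_nonneg] show ?thesis
    by (intro corner_estimate[OF multiplier_tent_eq[OF \<mu> e(1) g0(1) v1(1,3)]
        abs_integral_angle_weight_tent_le[OF e(1) g0(1) v1(1,3)] _ e(1) g0 angle_weight_lip_nonneg])
       (simp add: integral_v_corner_tent_slope[OF e(1) g0(1) v1(1,2)])
qed

lemma cost_multiplier_zero:
  assumes \<mu>: "\<forall>p\<in>variations. (m1, m2, m3, m4) \<bullet> variation_vec p = 0"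
  shows "m4 = 0"
proof (rule ccontr)
  assume m4: "m4 \<noteq> 0"
  define e0 where "e0 = min a ((b - a) / 2)"
  have e0: "0 < e0" using corners by (simp add: e0_def)
  define C where "C = 5 * \<bar>m4\<bar> * du_lip + 9 / 2 * angle_weight_lip m1 m2"
  have C: "0 \<le> C" using du_lip_nonneg angle_weight_lip_nonneg by (simp add: C_def)
  have expansion: "\<bar>m4 * (2 * u a + du a * (g - e) / 2) + angle_weight m1 m2 a * ((e + g) / 2)\<bar> \<le> C * e\<^sup>2"
    if "0 < e" "e < e0" "g = e \<or> g = 2 * e" for e g
    using corner_multiplier_expansion[OF \<mu>] that unfolding C_def e0_def by blast
  have "\<bar>2 * m4 * u a + angle_weight m1 m2 a * e\<bar> \<le> C * e\<^sup>2" if "0 < e" "e < e0" for e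
    using expansion[OF that, of e] by (simp add: algebra_simps)
  then have "2 * m4 * u a = 0" "angle_weight m1 m2 a = 0"
    using zero_if_abs_affine_le_square[OF e0] by blast+
  then have ua: "u a = 0" and weight_a: "angle_weight m1 m2 a = 0" using m4 by simp_all
  have "\<bar>0 + m4 * du a / 2 * e\<bar> \<le> C * e\<^sup>2" if "0 < e" "e < e0" for e
    using expansion[OF that, of "2 * e"] ua weight_a by (simp add: algebra_simps)
  then have "m4 * du a / 2 = 0" using zero_if_abs_affine_le_square(2)[OF e0] by blast
  then have "du a = 0" using m4 by simp
  then show False using u_du_not_both_zero[OF _ _ ua] corners by simp
qed

lemma no_nonzero_multiplier: "\<forall>p\<in>variations. \<mu> \<bullet> variation_vec p = 0 \<Longrightarrow> \<mu> = 0"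
proof -
  assume \<mu>: "\<forall>p\<in>variations. \<mu> \<bullet> variation_vec p = 0"
  obtain m1 m2 m3 m4 where \<mu>_eq: "\<mu> = (m1, m2, m3, m4)" by (metis prod.collapse)
  then have \<mu>': "\<forall>p\<in>variations. (m1, m2, m3, m4) \<bullet> variation_vec p = 0" using \<mu> by simp
  then have "m4 = 0" by (rule cost_multiplier_zero)
  then have "m1 = 0 \<and> m2 = 0 \<and> m3 = 0"
    by (intro multiplier_zero_if_cost_free) (use \<mu>' in simp)
  then show "\<mu> = 0" using \<open>m4 = 0\<close> \<mu>_eq by (simp add: zero_prod_def)
qed

end

section \<open>Non-optimality\<close>

context colinear_extremal
begin

lemma perturbation_by_variations:
  assumes e: "\<And>i. i \<in> Basis \<Longrightarrow> e i \<in> variations"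
  obtains Kw where "endpoint_perturbation T u_bound Kw th_refl v (\<lambda>i. fst (e i)) (\<lambda>i. snd (e i))"
proof -
  have adm: "admissible_variation (e i)" if "i \<in> Basis" for i
    using variations_admissible e that by blast
  then have "\<forall>i\<in>Basis. \<exists>K. \<forall>s\<in>{0..T}. \<bar>fst (e i) s\<bar> \<le> K \<and> \<bar>snd (e i) s\<bar> \<le> K"
    unfolding admissible_variation_def by blast
  then obtain K where "\<forall>i\<in>Basis. \<forall>s\<in>{0..T}. \<bar>fst (e i) s\<bar> \<le> K i \<and> \<bar>snd (e i) s\<bar> \<le> K i"
    by (metis bchoice)
  then have K: "\<bar>fst (e i) s\<bar> \<le> K i" "\<bar>snd (e i) s\<bar> \<le> K i" if "i \<in> Basis" "s \<in> {0..T}" for i s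
    using that by blast+
  have Kw: "\<bar>K i\<bar> \<le> (\<Sum>i\<in>(Basis :: R4 set). \<bar>K i\<bar>)" if "i \<in> Basis" for i
    by (rule member_le_sum[OF that]) auto
  show ?thesis
  proof (rule that[of "\<Sum>i\<in>Basis. \<bar>K i\<bar>"], unfold_locales)
    show "0 < T" "continuous_on {0..T} th_refl" "v \<in> borel_measurable borel"
      by (rule T_pos continuous_on_th_refl v_measurable)+
    show "\<bar>v s\<bar> \<le> u_bound" if "s \<in> {0..T}" for s using abs_v_le[OF that] .
    show "continuous_on {0..T} (fst (e i))" "snd (e i) \<in> borel_measurable borel" if "i \<in> Basis" for i
      using adm[OF that] unfolding admissible_variation_def by blast+
    show "\<bar>fst (e i) s\<bar> \<le> (\<Sum>i\<in>Basis. \<bar>K i\<bar>)" "\<bar>snd (e i) s\<bar> \<le> (\<Sum>i\<in>Basis. \<bar>K i\<bar>)"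
      if "i \<in> Basis" "s \<in> {0..T}" for i s
      using K[OF that] Kw[OF that(1)] by linarith+
  qed
qed

lemma exists_cheaper_steering_control:
  obtains vh where "mecp_steers T (x 0, y 0, th 0) vh" "mecp_cost T vh < mecp_cost T v"
proof -
  obtain e :: "R4 \<Rightarrow> (real \<Rightarrow> real) \<times> (real \<Rightarrow> real)"
    where e: "\<And>i. i \<in> Basis \<Longrightarrow> e i \<in> variations"
      and surj: "surj (\<lambda>h. \<Sum>i\<in>Basis. (h \<bullet> i) *\<^sub>R variation_vec (e i))"
    using surj_combination_if_no_orthogonal[OF no_nonzero_multiplier] by blast
  obtain Kw where "endpoint_perturbation T u_bound Kw th_refl v (\<lambda>i. fst (e i)) (\<lambda>i. snd (e i))"
    using perturbation_by_variations[OF e] .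
  then interpret P: endpoint_perturbation T u_bound Kw th_refl v "\<lambda>i. fst (e i)" "\<lambda>i. snd (e i)" .
  have "P.endpoint_deriv = (\<lambda>h. \<Sum>i\<in>Basis. (h \<bullet> i) *\<^sub>R variation_vec (e i))"
    by (intro ext) (simp add: P.endpoint_deriv_def P.first_variation_def variation_vec_def)
  then have "surj P.endpoint_deriv" using surj by simp
  then obtain h \<epsilon> where "0 < \<epsilon>" and h: "P.disp cos h = P.disp cos 0" "P.disp sin h = P.disp sin 0"
    "P.angle_pert h T = 0" "P.cost h = P.cost 0 - \<epsilon>"
    by (rule P.cheaper_perturbation_if_surj)
  have "(snd (e i) has_integral fst (e i) s) {0..s}" if "i \<in> Basis" "s \<in> {0..T}" for i s
    using variations_admissible[OF e[OF that(1)]] that(2) unfolding admissible_variation_def by blast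
  note mecp = P.mecp_perturbed_control[OF this v_has_integral, unfolded refl_initial]
  have "P.disp cos 0 = x T - x 0" "P.disp sin 0 = y T - y 0"
    using cos_th_refl_has_integral sin_th_refl_has_integral by (simp_all add: P.disp_def integral_unique)
  then have "mecp_steers T (x 0, y 0, th 0) (\<lambda>s. v s + P.control_pert h s)"
    using mecp[where h=h] h refl_final x_final y_final by (simp add: mecp_steers_def)
  moreover have "mecp_cost T (\<lambda>s. v s + P.control_pert h s) < mecp_cost T v"
    using mecp(5)[where h=h] mecp(5)[where h=0] h(4) \<open>0 < \<epsilon>\<close> by simp
  ultimately show ?thesis using that by blast
qed

lemma not_optimal:
  assumes U: "\<And>s. s \<in> {0..T} \<Longrightarrow> U s = u s"
  shows "\<not> mecp_optimal T (x 0, y 0, th 0) U"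
proof
  assume opt: "mecp_optimal T (x 0, y 0, th 0) U"
  have "mecp_cost T U = mecp_cost T v"
    unfolding mecp_cost_def using U v_sq by (intro set_lebesgue_integral_cong) auto
  moreover obtain vh where "mecp_steers T (x 0, y 0, th 0) vh" "mecp_cost T vh < mecp_cost T v"
    by (rule exists_cheaper_steering_control)
  moreover from this(1) have "mecp_cost T U \<le> mecp_cost T vh"
    using opt unfolding mecp_optimal_def by blast
  ultimately show False by simp
qed

end

lemma continuous_on_reverse:
  fixes F :: "real \<Rightarrow> real"
  assumes "continuous_on {0..tf} F"
  shows "continuous_on {0..tf} (\<lambda>s. F (tf - s))"
  by (rule continuous_on_compose2[OF assms]) (auto intro: continuous_intros)

lemma has_real_derivative_reverse:
  assumes "0 < s" "s < tf" and deriv: "(F has_real_derivative D) (at (tf - s) within {0..tf})"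
  shows "((\<lambda>s. F (tf - s)) has_real_derivative - D) (at s)"
proof -
  have "(F has_real_derivative D) (at (tf - s))"
    using deriv assms(1,2) by (simp add: at_within_Icc_at)
  then have "((\<lambda>s. F (tf - s)) has_real_derivative D * -1) (at s)"
    by (rule DERIV_chain2) (auto intro!: derivative_eq_intros)
  then show ?thesis by simp
qed

lemma colinear_if_equal_slopes:
  fixes X1 X2 Y1 Y2 \<theta>1 \<theta>2 :: real
  assumes "X1 \<noteq> X2" "cos \<theta>1 \<noteq> 0" "cos \<theta>2 \<noteq> 0"
    and slope: "(Y1 - Y2) / (X1 - X2) = tan \<theta>1" and tan: "tan \<theta>1 = tan \<theta>2"
  shows "sin (\<theta>1 - \<theta>2) = 0" "sin (\<theta>2 - \<theta>1) = 0"
    "(Y1 - Y2) * cos \<theta>1 = (X1 - X2) * sin \<theta>1" "(Y1 - Y2) * cos \<theta>2 = (X1 - X2) * sin \<theta>2"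
proof -
  have "sin \<theta>1 * cos \<theta>2 = sin \<theta>2 * cos \<theta>1"
    using tan assms(2,3) by (simp add: tan_def field_simps)
  then show "sin (\<theta>1 - \<theta>2) = 0" "sin (\<theta>2 - \<theta>1) = 0"
    by (simp_all add: sin_diff mult.commute)
  have "(Y1 - Y2) * cos \<theta> = (X1 - X2) * sin \<theta>" if "tan \<theta> = tan \<theta>1" "cos \<theta> \<noteq> 0" for \<theta>
  proof -
    have "Y1 - Y2 = tan \<theta> * (X1 - X2)" using slope that(1) assms(1) by (simp add: field_simps)
    then show ?thesis using that(2) by (simp add: tan_def field_simps)
  qed
  then show "(Y1 - Y2) * cos \<theta>1 = (X1 - X2) * sin \<theta>1" "(Y1 - Y2) * cos \<theta>2 = (X1 - X2) * sin \<theta>2"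
    using tan assms(2,3) by auto
qed

lemma backward_extremal_not_optimal:
  fixes tf px py c0 t1 t2 :: real and X Y Th :: "real \<Rightarrow> real"
  assumes init: "X 0 = 0" "Y 0 = 0" "Th 0 = - pi / 2"
    and odeX: "\<And>t. t \<in> {0..tf} \<Longrightarrow> (X has_real_derivative - cos (Th t)) (at t within {0..tf})"
    and odeY: "\<And>t. t \<in> {0..tf} \<Longrightarrow> (Y has_real_derivative - sin (Th t)) (at t within {0..tf})"
    and odeTh: "\<And>t. t \<in> {0..tf} \<Longrightarrow>
        (Th has_real_derivative - (px * Y t - py * X t + c0)) (at t within {0..tf})"
    and t12: "0 < t1" "t1 < t2" "t2 < tf"
    and colinear: "X t1 \<noteq> X t2" "sin (Th t2 - Th t1) = 0"
      "(Y t1 - Y t2) * cos (Th t2) = (X t1 - X t2) * sin (Th t2)"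
  shows "\<not> mecp_optimal tf (X tf, Y tf, Th tf) (\<lambda>t. px * Y (tf - t) - py * X (tf - t) + c0)"
proof -
  have cont: "continuous_on {0..tf} X" "continuous_on {0..tf} Y" "continuous_on {0..tf} Th"
    using DERIV_continuous_on[OF odeX] DERIV_continuous_on[OF odeY] DERIV_continuous_on[OF odeTh]
    by simp_all
  have at: "tf - s \<in> {0..tf}" if "0 < s" "s < tf" for s using that by auto
  interpret colinear_extremal tf px py c0 "tf - t2" "tf - t1" "\<lambda>s. Th (tf - s)" "\<lambda>s. X (tf - s)" "\<lambda>s. Y (tf - s)"
  proof
    show "0 < tf - t2" "tf - t2 < tf - t1" "tf - t1 < tf" using t12 by auto
    show "continuous_on {0..tf} (\<lambda>s. X (tf - s))" "continuous_on {0..tf} (\<lambda>s. Y (tf - s))"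
      "continuous_on {0..tf} (\<lambda>s. Th (tf - s))"
      using cont by (auto intro: continuous_on_reverse)
    fix s assume s: "0 < s" "s < tf"
    show "((\<lambda>s. Th (tf - s)) has_real_derivative px * Y (tf - s) - py * X (tf - s) + c0) (at s)"
      using has_real_derivative_reverse[OF s odeTh[OF at[OF s]]] by (simp add: algebra_simps)
    show "((\<lambda>s. X (tf - s)) has_real_derivative cos (Th (tf - s))) (at s)"
      using has_real_derivative_reverse[OF s odeX[OF at[OF s]]] by simp
    show "((\<lambda>s. Y (tf - s)) has_real_derivative sin (Th (tf - s))) (at s)"
      using has_real_derivative_reverse[OF s odeY[OF at[OF s]]] by simp
  qed (use init colinear in simp_all)
  have "\<not> mecp_optimal tf (X (tf - 0), Y (tf - 0), Th (tf - 0))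
      (\<lambda>t. px * Y (tf - t) - py * X (tf - t) + c0)"
    by (rule not_optimal) (simp add: u_def)
  then show ?thesis by simp
qed

theorem lemma2:
  fixes tf px py c0 t1 t2 :: real and X Y Th :: "real \<Rightarrow> real"
  assumes tf: "tf > 0"
    and init: "X 0 = 0" "Y 0 = 0" "Th 0 = - pi / 2"
    and odeX: "\<And>t. t \<in> {0..tf} \<Longrightarrow> (X has_real_derivative - cos (Th t)) (at t within {0..tf})"
    and odeY: "\<And>t. t \<in> {0..tf} \<Longrightarrow> (Y has_real_derivative - sin (Th t)) (at t within {0..tf})"
    and odeTh: "\<And>t. t \<in> {0..tf} \<Longrightarrow>
        (Th has_real_derivative - (px * Y t - py * X t + c0)) (at t within {0..tf})"
    and t12: "t1 \<in> {0<..<tf}" "t2 \<in> {0<..<tf}" "t1 \<noteq> t2"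
    and defined: "X t1 \<noteq> X t2" "cos (Th t1) \<noteq> 0" "cos (Th t2) \<noteq> 0"
    and colin: "(Y t1 - Y t2) / (X t1 - X t2) = tan (Th t1)" "tan (Th t1) = tan (Th t2)"
  shows "\<not> mecp_optimal tf (X tf, Y tf, Th tf) (\<lambda>t. px * Y (tf - t) - py * X (tf - t) + c0)"
proof -
  note colinear = colinear_if_equal_slopes[OF defined colin]
  note not_optimal = backward_extremal_not_optimal[OF init odeX odeY odeTh]
  consider "t1 < t2" | "t2 < t1" using t12(3) by linarith
  then show ?thesis
  proof cases
    case 1
    then show ?thesis using not_optimal[of t1 t2] t12 defined(1) colinear by auto
  next
    case 2
    have "(Y t2 - Y t1) * cos (Th t1) = (X t2 - X t1) * sin (Th t1)"
      using colinear(3) by (metis minus_diff_eq mult_minus_left)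
    then show ?thesis using not_optimal[of t2 t1] 2 t12 defined(1) colinear by auto
  qed
qed

end
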